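(* Let $\mathbb{T}$ be a split torus over $k$ with character lattice $M$, and let $K_{\mathbb{T}}=\mathrm{Frac}(k[M])$. A rational $\mathbb{G}_a$-action $\alpha:\mathbb{G}_a\times\mathbb{T}\dashrightarrow\mathbb{T}$ is $\mathbb{T}$-homogeneous if and only if its associated $k$-derivation $\partial:k[M]\to K_{\mathbb{T}}$ is homogeneous. Moreover, every homogeneous $k$-derivation $\partial:k[M]\to K_{\mathbb{T}}$ takes values in $k[M]$.
   Context: $k$ is a field of characteristic zero, $\mathbb{T}=\mathbb{G}_{m,k}^n$, $M=\mathrm{Hom}(\mathbb{T},\mathbb{G}_{m,k})$, $k[M]=\bigoplus_{m\in M}k\chi^m$ the $M$-graded coordinate ring of $\mathbb{T}$. An element of $K_{\mathbb{T}}$ is homogeneous if it is a quotient of homogeneous elements of $k[M]$; a derivation $\partial$ (defined on $k[M]$ or $K_{\mathbb{T}}$, with values in $K_{\mathbb{T}}$) is homogeneous if it sends homogeneous elements to homogeneous elements. The derivation associated to a rational $\mathbb{G}_a$-action $\alpha$ is $f\mapsto\frac{d}{dt}\alpha^*(f)|_{t=0}$. A rational $\mathbb{G}_a$-action on a variety with $\mathbb{T}$-action is $\mathbb{T}$-homogeneous if it semi-commutes with $\mathbb{T}$: there is a character $\chi$ of $\mathbb{T}$ with $\lambda\cdot(t\cdot x)=(\chi(\lambda)t)\cdot(\lambda\cdot x)$ for all $\lambda\in\mathbb{T}$, i.e. the subgroup of birational transformations generated by $\mathbb{T}$ and $\mathbb{G}_a$ is a semidirect product $\mathbb{T}\ltimes\mathbb{G}_a$.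 *)

theory Defs
  imports "HOL-Library.Poly_Mapping" "HOL-Computational_Algebra.Polynomial"
          "HOL-Computational_Algebra.Fraction_Field"
begin

(* The split torus T = G_m^n is encoded through a finite index type 'n
  (n = CARD('n)); its character lattice is M = ('n =>0 int) = Z^n
  (the linorder on 'n is only needed so that Isabelle knows k[M] is a domain).
  k[M] is the group algebra M =>0 'k (element  Poly_Mapping.single m c  = c chi^m),
  K_T = Frac(k[M]),  K_T(t) = Frac(K_T[t]) = k(G_a x T),
  K_T(t)(s) = Frac(K_T(t)[s]) = k(G_a x G_a x T). *)

type_synonym ('n, 'k) laurent = "('n \<Rightarrow>\<^sub>0 int) \<Rightarrow>\<^sub>0 'k"
type_synonym ('n, 'k) KT = "('n, 'k) laurent fract"
type_synonym ('n, 'k) KTt = "('n, 'k) KT poly fract"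
type_synonym ('n, 'k) KTst = "('n, 'k) KTt poly fract"

definition to_fr :: "'a::idom \<Rightarrow> 'a fract" where
  "to_fr x = Fract x 1"

definition fract_lift :: "('a::idom \<Rightarrow> 'b::field) \<Rightarrow> 'a fract \<Rightarrow> 'b" where
  "fract_lift h \<phi> = (THE c. \<exists>p q. q \<noteq> 0 \<and> \<phi> = Fract p q \<and> c = h p / h q)"

definition regular0 :: "'a::field poly fract \<Rightarrow> bool" where
  "regular0 \<phi> \<longleftrightarrow> (\<exists>p q. poly q 0 \<noteq> 0 \<and> \<phi> = Fract p q)"

definition eval0 :: "'a::field poly fract \<Rightarrow> 'a" where
  "eval0 \<phi> = (THE c. \<exists>p q. poly q 0 \<noteq> 0 \<and> \<phi> = Fract p q \<and> c = poly p 0 / poly q 0)"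

definition ddt0 :: "'a::field poly fract \<Rightarrow> 'a" where
  "ddt0 \<phi> = (THE c. \<exists>p q. poly q 0 \<noteq> 0 \<and> \<phi> = Fract p q \<and>
     c = (poly (pderiv p) 0 * poly q 0 - poly p 0 * poly (pderiv q) 0) / (poly q 0)^2)"

definition homog_R :: "('n, 'k::zero) laurent \<Rightarrow> bool" where
  "homog_R f \<longleftrightarrow> (\<exists>m c. f = Poly_Mapping.single m c)"

definition homog_K ::
  "('n::{finite,linorder}, 'k::field_char_0) KT \<Rightarrow> bool" where
  "homog_K \<phi> \<longleftrightarrow> (\<exists>a b. homog_R a \<and> homog_R b \<and> b \<noteq> 0 \<and> \<phi> = Fract a b)"

definition k_derivation ::
  "(('n::{finite,linorder}, 'k::field_char_0) laurent \<Rightarrow> ('n, 'k) KT) \<Rightarrow> bool" where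
  "k_derivation D \<longleftrightarrow>
     (\<forall>f g. D (f + g) = D f + D g) \<and>
     (\<forall>f g. D (f * g) = to_fr f * D g + to_fr g * D f) \<and>
     (\<forall>c f. D (Poly_Mapping.single 0 c * f) = to_fr (Poly_Mapping.single 0 c) * D f)"

definition homogeneous_der ::
  "(('n::{finite,linorder}, 'k::field_char_0) laurent \<Rightarrow> ('n, 'k) KT) \<Rightarrow> bool" where
  "homogeneous_der D \<longleftrightarrow> (\<forall>f. homog_R f \<longrightarrow> homog_K (D f))"

(* Rational G_a-actions on T, given by their comorphism
  A = alpha^* : k[M] \<rightarrow> k(G_a x T) = K_T(t). *)

definition constK :: "('n::{finite,linorder}, 'k::field_char_0) KT \<Rightarrow> ('n, 'k) KTt" where
  "constK c = to_fr [:c:]"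

definition A_ext :: "(('n::{finite,linorder}, 'k::field_char_0) laurent \<Rightarrow> ('n, 'k) KTt)
    \<Rightarrow> ('n, 'k) KT \<Rightarrow> ('n, 'k) KTt" where
  "A_ext A = fract_lift A"

(* comorphism of (s,t,x) \<mapsto> alpha(s, alpha(t,x)), applied to phi(s,x) in K_T(s) *)
definition comp_pullback :: "(('n::{finite,linorder}, 'k::field_char_0) laurent \<Rightarrow> ('n, 'k) KTt)
    \<Rightarrow> ('n, 'k) KTt \<Rightarrow> ('n, 'k) KTst" where
  "comp_pullback A = fract_lift (\<lambda>p. to_fr (map_poly (A_ext A) p))"

(* substitution t \<mapsto> s + t : K_T(t) \<rightarrow> K_T(t)(s) *)
definition shift_st :: "('n::{finite,linorder}, 'k::field_char_0) KTt \<Rightarrow> ('n, 'k) KTst" where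
  "shift_st = fract_lift (\<lambda>p. to_fr (poly (map_poly (\<lambda>c. [: constK c :]) p)
                                          [: to_fr [:0, 1:], 1 :]))"

definition rational_Ga_action ::
  "(('n::{finite,linorder}, 'k::field_char_0) laurent \<Rightarrow> ('n, 'k) KTt) \<Rightarrow> bool" where
  "rational_Ga_action A \<longleftrightarrow>
     A 1 = 1 \<and> (\<forall>f g. A (f + g) = A f + A g) \<and> (\<forall>f g. A (f * g) = A f * A g) \<and>
     (\<forall>c. A (Poly_Mapping.single 0 c) = constK (to_fr (Poly_Mapping.single 0 c))) \<and>
     inj A \<and>
     (\<forall>f. regular0 (A f) \<and> eval0 (A f) = to_fr f) \<and>
     (\<forall>f. comp_pullback A (A f) = shift_st (A f))"

definition associated_derivation ::
  "(('n::{finite,linorder}, 'k::field_char_0) laurent \<Rightarrow> ('n, 'k) KTt)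
    \<Rightarrow> ('n, 'k) laurent \<Rightarrow> ('n, 'k) KT" where
  "associated_derivation A f = ddt0 (A f)"

(* Torus action: lambda \<in> T(k) = ('n \<Rightarrow> k^x), chi^m(lambda) = prod_i lambda_i^(m_i). *)
definition charval :: "('n::finite \<Rightarrow> 'k::field) \<Rightarrow> ('n \<Rightarrow>\<^sub>0 int) \<Rightarrow> 'k" where
  "charval l m = (\<Prod>i\<in>UNIV. l i powi Poly_Mapping.lookup m i)"

(* comorphism of x \<mapsto> lambda . x on k[M] and on K_T *)
definition torus_R :: "('n::{finite,linorder} \<Rightarrow> 'k::field_char_0) \<Rightarrow> ('n, 'k) laurent \<Rightarrow> ('n, 'k) laurent" where
  "torus_R l f = Poly_Mapping.mapp (\<lambda>m c. charval l m * c) f"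

definition torus_K :: "('n::{finite,linorder} \<Rightarrow> 'k::field_char_0) \<Rightarrow> ('n, 'k) KT \<Rightarrow> ('n, 'k) KT" where
  "torus_K l = fract_lift (\<lambda>f. to_fr (torus_R l f))"

(* comorphism of (t, x) \<mapsto> (c t, lambda . x) on K_T(t) *)
definition twist :: "('n::{finite,linorder} \<Rightarrow> 'k::field_char_0) \<Rightarrow> 'k \<Rightarrow> ('n, 'k) KTt \<Rightarrow> ('n, 'k) KTt" where
  "twist l c = fract_lift (\<lambda>p. to_fr (pcompose (map_poly (torus_K l) p)
                                  [: 0, to_fr (Poly_Mapping.single 0 c) :]))"

(* T-homogeneous: there is a character chi = chi^{m0} with
  lambda . (t . x) = (chi(lambda) t) . (lambda . x) for all lambda \<in> T(k). *)
definition T_homogeneous ::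
  "(('n::{finite,linorder}, 'k::field_char_0) laurent \<Rightarrow> ('n, 'k) KTt) \<Rightarrow> bool" where
  "T_homogeneous A \<longleftrightarrow> (\<exists>m0. \<forall>l. (\<forall>i. l i \<noteq> 0) \<longrightarrow>
      (\<forall>f. A (torus_R l f) = twist l (charval l m0) (A f)))"

end

theory Submission
  imports Defs "HOL-Computational_Algebra.Polynomial_FPS"
begin

unbundle fps_syntax

text \<open>
  Expanding \<open>\<alpha>\<^sup>*f\<close> as a power series in \<open>t\<close>, the action axiom
  \<open>\<alpha>(s, \<alpha>(t, x)) = \<alpha>(s + t, x)\<close> differentiated at \<open>s = 0\<close> gives the ODE
  \<open>d/dt \<alpha>\<^sup>*f = \<alpha>\<^sup>*(\<partial>f)\<close>.
  A homogeneous element of \<open>K\<^sub>T\<close> is a Laurent monomial, so a homogeneous derivation maps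
  \<open>k[M]\<close> into itself, and the Leibniz rule for \<open>\<chi>^a \<chi>^b = \<chi>^(a+b)\<close> forces it to raise all
  degrees by the same \<open>m\<^sub>0\<close>; hence \<open>\<partial>(\<lambda>\<cdot>f) = \<chi>^(-m\<^sub>0)(\<lambda>) \<lambda>\<cdot>(\<partial>f)\<close>. Now the ODE
  yields Taylor's formula \<open>\<alpha>\<^sup>*f = \<Sum>\<^sub>k \<partial>\<^sup>kf t\<^sup>k/k!\<close>, and T-homogeneity with
  character \<open>\<chi>^(-m\<^sub>0)\<close> is read off coefficientwise.
  Conversely, for a T-homogeneous action the coefficient of \<open>t\<close> shows that every
  \<open>\<partial>(\<chi>^a)\<close> is semi-invariant under the torus, and a semi-invariant rational function is a
  quotient of monomials: restricting the torus to one coordinate at a time and comparing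
  coefficients of Laurent polynomials in that coordinate cuts any representing fraction
  down to one whose numerator and denominator have a single exponent in that coordinate.
\<close>

section \<open>Injective ring homomorphisms and fraction fields\<close>

definition inj_ring_hom :: "('a::idom \<Rightarrow> 'b::idom) \<Rightarrow> bool" where
  "inj_ring_hom h \<longleftrightarrow> (\<forall>x y. h (x + y) = h x + h y) \<and> (\<forall>x y. h (x * y) = h x * h y) \<and> h 1 = 1 \<and>
     (\<forall>x. x \<noteq> 0 \<longrightarrow> h x \<noteq> 0)"

lemma inj_ring_hom_add: "inj_ring_hom h \<Longrightarrow> h (x + y) = h x + h y"
  and inj_ring_hom_mult: "inj_ring_hom h \<Longrightarrow> h (x * y) = h x * h y"
  and inj_ring_hom_1: "inj_ring_hom h \<Longrightarrow> h 1 = 1"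
  and inj_ring_hom_nonzero: "inj_ring_hom h \<Longrightarrow> x \<noteq> 0 \<Longrightarrow> h x \<noteq> 0"
  by (simp_all add: inj_ring_hom_def)

lemma inj_ring_hom_0: "inj_ring_hom h \<Longrightarrow> h 0 = 0"
  using inj_ring_hom_add[of h 0 0] by (metis add_cancel_right_right add_0)

lemma inj_ring_hom_uminus: "inj_ring_hom h \<Longrightarrow> h (-x) = - h x"
  using inj_ring_hom_add[of h x "-x"] inj_ring_hom_0[of h] by (simp add: eq_neg_iff_add_eq_0 add.commute)

lemma inj_ring_hom_diff: "inj_ring_hom h \<Longrightarrow> h (x - y) = h x - h y"
  using inj_ring_hom_add[of h x "-y"] inj_ring_hom_uminus[of h y] by simp

lemma inj_ring_hom_eq_iff: "inj_ring_hom h \<Longrightarrow> h x = h y \<longleftrightarrow> x = y"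
  using inj_ring_hom_diff[of h x y] inj_ring_hom_nonzero[of h "x-y"] by auto

lemma inj_ring_hom_sum: "inj_ring_hom h \<Longrightarrow> h (sum f A) = sum (\<lambda>a. h (f a)) A"
  by (induction A rule: infinite_finite_induct) (auto simp: inj_ring_hom_0 inj_ring_hom_add)

lemma inj_ring_hom_power: "inj_ring_hom h \<Longrightarrow> h (x ^ n) = h x ^ n"
  by (induction n) (auto simp: inj_ring_hom_1 inj_ring_hom_mult)

lemma inj_ring_hom_of_nat: "inj_ring_hom h \<Longrightarrow> h (of_nat n) = of_nat n"
  by (induction n) (auto simp: inj_ring_hom_0 inj_ring_hom_1 inj_ring_hom_add)

lemma inj_ring_hom_divide:
  fixes h :: "'a::field \<Rightarrow> 'b::field"
  assumes h: "inj_ring_hom h" shows "h (x / y) = h x / h y"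
proof (cases "y = 0")
  case True then show ?thesis by (simp add: inj_ring_hom_0[OF h])
next
  case False
  then have "h (x / y) * h y = h x" by (metis h inj_ring_hom_mult nonzero_divide_eq_eq)
  with False show ?thesis by (simp add: inj_ring_hom_nonzero[OF h] eq_divide_eq)
qed

lemma inj_ring_hom_comp: "inj_ring_hom g \<Longrightarrow> inj_ring_hom h \<Longrightarrow> inj_ring_hom (g \<circ> h)"
  by (simp add: inj_ring_hom_def)

lemma inj_ring_hom_to_fr: "inj_ring_hom (to_fr :: 'a::idom \<Rightarrow> _)"
  unfolding inj_ring_hom_def to_fr_def
  by (auto simp: eq_fract One_fract_def) (metis eq_fract(1) one_neq_zero Zero_fract_def mult_1_right)

lemma to_fr_inj: "to_fr x = to_fr y \<Longrightarrow> x = y"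
  using inj_ring_hom_eq_iff[OF inj_ring_hom_to_fr] by blast

lemma inj_ring_hom_to_fr_comp: "inj_ring_hom h \<Longrightarrow> inj_ring_hom (\<lambda>x. to_fr (h x))"
  using inj_ring_hom_comp[OF inj_ring_hom_to_fr] by (simp add: comp_def)

lemma to_fr_Fract: "(b::'a::idom) \<noteq> 0 \<Longrightarrow> to_fr a / to_fr b = Fract a b"
  by (simp add: to_fr_def)

lemma fract_lift_Fract:
  fixes h :: "'a::idom \<Rightarrow> 'b::field"
  assumes h: "inj_ring_hom h" and q: "q \<noteq> 0"
  shows "fract_lift h (Fract p q) = h p / h q"
  unfolding fract_lift_def
proof (rule the_equality)
  show "\<exists>p' q'. q' \<noteq> 0 \<and> Fract p q = Fract p' q' \<and> h p / h q = h p' / h q'"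
    using q by blast
next
  fix c assume "\<exists>p' q'. q' \<noteq> 0 \<and> Fract p q = Fract p' q' \<and> c = h p' / h q'"
  then obtain p' q' where q': "q' \<noteq> 0" and e: "Fract p q = Fract p' q'" and c: "c = h p' / h q'"
    by blast
  from e q q' have "p * q' = p' * q" by (simp add: eq_fract)
  then have "h p * h q' = h p' * h q" using h by (metis inj_ring_hom_mult)
  moreover have "h q \<noteq> 0" "h q' \<noteq> 0" using h q q' by (auto simp: inj_ring_hom_nonzero)
  ultimately have "c * h q * h q' = h p * h q'" using c by (simp add: field_simps)
  then show "c = h p / h q" using \<open>h q \<noteq> 0\<close> \<open>h q' \<noteq> 0\<close> by (simp add: eq_divide_eq)
qed

lemma fract_lift_to_fr:
  fixes h :: "'a::idom \<Rightarrow> 'b::field"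
  assumes h: "inj_ring_hom h" shows "fract_lift h (to_fr x) = h x"
  using fract_lift_Fract[OF h, of 1 x] h by (simp add: to_fr_def inj_ring_hom_1)

lemma fract_lift_to_fr_Fract:
  assumes g: "inj_ring_hom g" and q: "q \<noteq> 0"
  shows "fract_lift (\<lambda>x. to_fr (g x)) (Fract p q) = Fract (g p) (g q)"
  using fract_lift_Fract[OF inj_ring_hom_to_fr_comp[OF g] q] inj_ring_hom_nonzero[OF g q]
  by (simp add: to_fr_Fract)

lemma inj_ring_hom_fract_lift:
  fixes h :: "'a::idom \<Rightarrow> 'b::field"
  assumes h: "inj_ring_hom h" shows "inj_ring_hom (fract_lift h)"
  unfolding inj_ring_hom_def
proof (intro conjI allI impI)
  fix x y :: "'a fract"
  show "fract_lift h (x + y) = fract_lift h x + fract_lift h y"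
    by (cases x, cases y)
      (simp add: fract_lift_Fract[OF h] h inj_ring_hom_add inj_ring_hom_mult inj_ring_hom_nonzero field_simps)
  show "fract_lift h (x * y) = fract_lift h x * fract_lift h y"
    by (cases x, cases y) (simp add: fract_lift_Fract[OF h] h inj_ring_hom_mult)
  show "fract_lift h 1 = 1" using fract_lift_to_fr[OF h, of 1] h
    by (simp add: inj_ring_hom_1 to_fr_def One_fract_def)
  assume "x \<noteq> 0" then show "fract_lift h x \<noteq> 0"
    by (cases x) (auto simp: fract_lift_Fract[OF h] h inj_ring_hom_nonzero Zero_fract_def eq_fract)
qed

lemma inj_ring_hom_map_poly:
  fixes h :: "'a::idom \<Rightarrow> 'b::idom"
  assumes h: "inj_ring_hom h" shows "inj_ring_hom (map_poly h)"
  unfolding inj_ring_hom_def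
proof (intro conjI allI impI)
  have h0: "h 0 = 0" using h by (rule inj_ring_hom_0)
  fix x y :: "'a poly"
  show "map_poly h (x + y) = map_poly h x + map_poly h y"
    by (rule poly_eqI) (simp add: coeff_map_poly h0 inj_ring_hom_add[OF h])
  show "map_poly h (x * y) = map_poly h x * map_poly h y"
    by (rule poly_eqI) (simp add: coeff_map_poly h0 coeff_mult inj_ring_hom_sum[OF h] inj_ring_hom_mult[OF h])
  show "map_poly h 1 = 1" by (simp add: inj_ring_hom_1[OF h])
  assume "x \<noteq> 0"
  then obtain n where "coeff x n \<noteq> 0" using leading_coeff_neq_0 by blast
  then have "coeff (map_poly h x) n \<noteq> 0" by (simp add: coeff_map_poly h0 inj_ring_hom_nonzero[OF h])
  then show "map_poly h x \<noteq> 0" by auto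
qed

lemma inj_ring_hom_pcompose:
  fixes Q :: "'a::idom poly"
  assumes "degree Q > 0" shows "inj_ring_hom (\<lambda>p. pcompose p Q)"
proof -
  have "pcompose 1 Q = 1" by (simp add: one_pCons pcompose_pCons)
  then show ?thesis unfolding inj_ring_hom_def using assms
    by (auto simp: pcompose_add pcompose_mult pcompose_eq_0_iff)
qed

section \<open>Power series of rational functions regular at zero\<close>

lemma fps_inverse_nth_1:
  fixes f :: "'a::field fps"
  assumes f0: "f $ 0 \<noteq> 0"
  shows "inverse f $ 1 = - f $ 1 / (f $ 0)^2"
proof -
  have "f $ 0 * inverse f $ 1 + f $ 1 * inverse (f $ 0) = 0"
    using fps_mult_nth_1[of f "inverse f"] inverse_mult_eq_1'[OF f0] f0 by simp
  with f0 show ?thesis by (auto simp: field_simps power2_eq_square eq_neg_iff_add_eq_0 add.commute)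
qed

lemma regular0E:
  "regular0 \<phi> \<Longrightarrow> (\<And>p q. poly q 0 \<noteq> 0 \<Longrightarrow> \<phi> = Fract p q \<Longrightarrow> P) \<Longrightarrow> P"
  unfolding regular0_def by blast

lemma regular0_Fract: "poly q 0 \<noteq> 0 \<Longrightarrow> regular0 (Fract p q)"
  unfolding regular0_def by blast

lemma regular0_add: assumes "regular0 \<phi>" "regular0 \<psi>" shows "regular0 (\<phi> + \<psi>)"
proof -
  obtain p q where q: "poly q 0 \<noteq> 0" and e: "\<phi> = Fract p q" using assms(1) by (rule regular0E)
  obtain p' q' where q': "poly q' 0 \<noteq> 0" and e': "\<psi> = Fract p' q'" using assms(2) by (rule regular0E)
  have "q \<noteq> 0" "q' \<noteq> 0" using q q' by auto
  then have "\<phi> + \<psi> = Fract (p * q' + p' * q) (q * q')" using e e' by simp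
  then show ?thesis using q q' by (simp add: regular0_Fract)
qed

lemma regular0_uminus: assumes "regular0 \<phi>" shows "regular0 (- \<phi>)"
proof -
  obtain p q where q: "poly q 0 \<noteq> 0" and e: "\<phi> = Fract p q" using assms(1) by (rule regular0E)
  have "- \<phi> = Fract (- p) q" using e by simp
  then show ?thesis using q by (simp add: regular0_Fract)
qed

lemma regular0_diff: "regular0 \<phi> \<Longrightarrow> regular0 \<psi> \<Longrightarrow> regular0 (\<phi> - \<psi>)"
  using regular0_add[of \<phi> "- \<psi>"] regular0_uminus[of \<psi>] by simp

definition fps_of_fract :: "'a::field poly fract \<Rightarrow> 'a fps" where
  "fps_of_fract \<phi> = (THE G. \<exists>p q. poly q 0 \<noteq> 0 \<and> \<phi> = Fract p q \<and> G = fps_of_poly p * inverse (fps_of_poly q))"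

lemma fps_of_fract_Fract:
  fixes p q :: "'a::field poly"
  assumes q: "poly q 0 \<noteq> 0"
  shows "fps_of_fract (Fract p q) = fps_of_poly p * inverse (fps_of_poly q)"
  unfolding fps_of_fract_def
proof (rule the_equality)
  show "\<exists>p' q'. poly q' 0 \<noteq> 0 \<and> Fract p q = Fract p' q' \<and>
      fps_of_poly p * inverse (fps_of_poly q) = fps_of_poly p' * inverse (fps_of_poly q')"
    using q by blast
next
  fix G assume "\<exists>p' q'. poly q' 0 \<noteq> 0 \<and> Fract p q = Fract p' q' \<and>
      G = fps_of_poly p' * inverse (fps_of_poly q')"
  then obtain p' q' where q': "poly q' 0 \<noteq> 0" and e: "Fract p q = Fract p' q'"
    and G: "G = fps_of_poly p' * inverse (fps_of_poly q')" by blast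
  have qn: "q \<noteq> 0" "q' \<noteq> 0" using q q' by auto
  from e qn have pq: "p * q' = p' * q" by (simp add: eq_fract)
  have u: "fps_of_poly q $ 0 \<noteq> 0" "fps_of_poly q' $ 0 \<noteq> 0"
    using q q' by (simp_all add: poly_0_coeff_0)
  have "fps_of_poly p * fps_of_poly q' = fps_of_poly p' * fps_of_poly q"
    using pq by (metis fps_of_poly_mult)
  note i1 = inverse_mult_eq_1[OF u(1)] and i2 = inverse_mult_eq_1[OF u(2)]
  have "fps_of_poly p * inverse (fps_of_poly q) =
     fps_of_poly p * inverse (fps_of_poly q) * (inverse (fps_of_poly q') * fps_of_poly q')"
    using i2 by simp
  also have "\<dots> = (fps_of_poly p * fps_of_poly q') * (inverse (fps_of_poly q) * inverse (fps_of_poly q'))"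
    by (simp only: mult_ac)
  also have "\<dots> = (fps_of_poly p' * fps_of_poly q) * (inverse (fps_of_poly q) * inverse (fps_of_poly q'))"
    by (simp only: \<open>fps_of_poly p * fps_of_poly q' = fps_of_poly p' * fps_of_poly q\<close>)
  also have "\<dots> = fps_of_poly p' * inverse (fps_of_poly q') * (inverse (fps_of_poly q) * fps_of_poly q)"
    by (simp only: mult_ac)
  also have "\<dots> = G" using i1 G by simp
  finally show "G = fps_of_poly p * inverse (fps_of_poly q)" by simp
qed

lemma fps_of_fract_Fract_nth_0:
  fixes p q :: "'a::field poly"
  assumes q: "poly q 0 \<noteq> 0"
  shows "fps_of_fract (Fract p q) $ 0 = poly p 0 / poly q 0"
  using q by (simp add: fps_of_fract_Fract poly_0_coeff_0 field_simps)

lemma fps_of_fract_Fract_nth_1: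
  fixes p q :: "'a::field poly"
  assumes q: "poly q 0 \<noteq> 0"
  shows "fps_of_fract (Fract p q) $ 1 = (poly (pderiv p) 0 * poly q 0 - poly p 0 * poly (pderiv q) 0) / (poly q 0)^2"
proof -
  have u: "fps_of_poly q $ 0 \<noteq> 0" using q by (simp add: poly_0_coeff_0)
  show ?thesis using q
    by (simp add: fps_of_fract_Fract fps_mult_nth_1 fps_inverse_nth_1[OF u, simplified] poly_0_coeff_0 coeff_pderiv power2_eq_square field_simps)
qed

lemma eval0_eq_fps_nth_0:
  assumes "regular0 \<phi>" shows "eval0 \<phi> = fps_of_fract \<phi> $ 0"
proof -
  obtain p q where q: "poly q 0 \<noteq> 0" and e: "\<phi> = Fract p q" using assms by (rule regular0E)
  show ?thesis unfolding eval0_def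
  proof (rule the_equality)
    show "\<exists>p q. poly q 0 \<noteq> 0 \<and> \<phi> = Fract p q \<and> fps_of_fract \<phi> $ 0 = poly p 0 / poly q 0"
      using q e fps_of_fract_Fract_nth_0 by blast
  qed (auto simp: fps_of_fract_Fract_nth_0)
qed

lemma ddt0_eq_fps_nth_1:
  assumes "regular0 \<phi>" shows "ddt0 \<phi> = fps_of_fract \<phi> $ 1"
proof -
  obtain p q where q: "poly q 0 \<noteq> 0" and e: "\<phi> = Fract p q" using assms by (rule regular0E)
  show ?thesis unfolding ddt0_def
  proof (rule the_equality)
    show "\<exists>p q. poly q 0 \<noteq> 0 \<and> \<phi> = Fract p q \<and> fps_of_fract \<phi> $ 1 =
       (poly (pderiv p) 0 * poly q 0 - poly p 0 * poly (pderiv q) 0) / (poly q 0)^2"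
      using q e fps_of_fract_Fract_nth_1 by blast
  qed (metis fps_of_fract_Fract_nth_1)
qed

lemma fps_of_fract_add:
  assumes "regular0 \<phi>" "regular0 \<psi>" shows "fps_of_fract (\<phi> + \<psi>) = fps_of_fract \<phi> + fps_of_fract \<psi>"
proof -
  obtain p q where q: "poly q 0 \<noteq> 0" and e: "\<phi> = Fract p q" using assms(1) by (rule regular0E)
  obtain p' q' where q': "poly q' 0 \<noteq> 0" and e': "\<psi> = Fract p' q'" using assms(2) by (rule regular0E)
  have qn: "q \<noteq> 0" "q' \<noteq> 0" using q q' by auto
  have u: "fps_of_poly q $ 0 \<noteq> 0" "fps_of_poly q' $ 0 \<noteq> 0"
    using q q' by (simp_all add: poly_0_coeff_0)
  note i1 = inverse_mult_eq_1[OF u(1)] and i2 = inverse_mult_eq_1[OF u(2)]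
  have s: "\<phi> + \<psi> = Fract (p * q' + p' * q) (q * q')" using e e' qn by simp
  have pq: "poly (q * q') 0 \<noteq> 0" using q q' by simp
  let ?P = "fps_of_poly p" and ?Q = "fps_of_poly q" and ?P' = "fps_of_poly p'" and ?Q' = "fps_of_poly q'"
  have "fps_of_fract (\<phi> + \<psi>) = (?P * ?Q' + ?P' * ?Q) * (inverse ?Q * inverse ?Q')"
    unfolding s fps_of_fract_Fract[OF pq] by (simp add: fps_of_poly_add fps_of_poly_mult fps_inverse_mult)
  also have "\<dots> = ?P * inverse ?Q * (inverse ?Q' * ?Q') + ?P' * inverse ?Q' * (inverse ?Q * ?Q)"
    by (simp add: algebra_simps)
  also have "\<dots> = fps_of_fract \<phi> + fps_of_fract \<psi>" using i1 i2 e e' q q' by (simp add: fps_of_fract_Fract)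
  finally show ?thesis .
qed

lemma fps_of_fract_mult:
  assumes "regular0 \<phi>" "regular0 \<psi>" shows "fps_of_fract (\<phi> * \<psi>) = fps_of_fract \<phi> * fps_of_fract \<psi>"
proof -
  obtain p q where q: "poly q 0 \<noteq> 0" and e: "\<phi> = Fract p q" using assms(1) by (rule regular0E)
  obtain p' q' where q': "poly q' 0 \<noteq> 0" and e': "\<psi> = Fract p' q'" using assms(2) by (rule regular0E)
  have s: "\<phi> * \<psi> = Fract (p * p') (q * q')" using e e' by simp
  have pq: "poly (q * q') 0 \<noteq> 0" using q q' by simp
  have "fps_of_fract (\<phi> * \<psi>) = fps_of_poly (p * p') * inverse (fps_of_poly (q * q'))"
    unfolding s by (rule fps_of_fract_Fract[OF pq])
  then show ?thesis unfolding e e' fps_of_fract_Fract[OF q] fps_of_fract_Fract[OF q']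
    by (simp add: fps_of_poly_mult fps_inverse_mult algebra_simps)
qed

lemma fps_of_fract_diff:
  assumes "regular0 \<phi>" "regular0 \<psi>" shows "fps_of_fract (\<phi> - \<psi>) = fps_of_fract \<phi> - fps_of_fract \<psi>"
proof -
  have "fps_of_fract (\<phi> - \<psi>) + fps_of_fract \<psi> = fps_of_fract \<phi>"
    using fps_of_fract_add[OF regular0_diff[OF assms] assms(2)] by simp
  then show ?thesis by (simp add: eq_diff_eq)
qed

lemma fps_of_fract_eq_0D:
  assumes "regular0 \<phi>" "fps_of_fract \<phi> = 0" shows "\<phi> = 0"
proof -
  obtain p q where q: "poly q 0 \<noteq> 0" and e: "\<phi> = Fract p q" using assms(1) by (rule regular0E)
  have u: "fps_of_poly q $ 0 \<noteq> 0" using q by (simp add: poly_0_coeff_0)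
  have "fps_of_poly p * inverse (fps_of_poly q) * fps_of_poly q = 0"
    using assms e q by (simp add: fps_of_fract_Fract)
  then have "fps_of_poly p = 0" using inverse_mult_eq_1[OF u] by (simp add: mult.assoc)
  then have "p = 0" by (metis fps_of_poly_0 fps_of_poly_eq_iff)
  then show ?thesis using e by (simp add: fract_collapse)
qed

lemma fps_of_fract_inj:
  assumes "regular0 \<phi>" "regular0 \<psi>" "fps_of_fract \<phi> = fps_of_fract \<psi>" shows "\<phi> = \<psi>"
  using fps_of_fract_eq_0D[OF regular0_diff[OF assms(1,2)]] fps_of_fract_diff[OF assms(1,2)] assms(3) by simp

lemma fps_of_fract_to_fr: "fps_of_fract (to_fr p) = fps_of_poly p"
  unfolding to_fr_def by (simp add: fps_of_fract_Fract)

definition scale_poly :: "('a::field \<Rightarrow> 'a) \<Rightarrow> 'a \<Rightarrow> 'a poly \<Rightarrow> 'a poly" where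
  "scale_poly h C p = pcompose (map_poly h p) [:0, C:]"

definition scale_fract :: "('a::field \<Rightarrow> 'a) \<Rightarrow> 'a \<Rightarrow> 'a poly fract \<Rightarrow> 'a poly fract" where
  "scale_fract h C = fract_lift (\<lambda>p. to_fr (scale_poly h C p))"

definition fps_scale :: "('a::field \<Rightarrow> 'a) \<Rightarrow> 'a \<Rightarrow> 'a fps \<Rightarrow> 'a fps" where
  "fps_scale h C G = Abs_fps (\<lambda>k. C ^ k * h (G $ k))"

lemma fps_scale_nth [simp]: "fps_scale h C G $ k = C ^ k * h (G $ k)"
  by (simp add: fps_scale_def)

lemma inj_ring_hom_scale_poly:
  assumes h: "inj_ring_hom h" and C: "C \<noteq> 0"
  shows "inj_ring_hom (scale_poly h C)"
  using inj_ring_hom_comp[OF inj_ring_hom_pcompose inj_ring_hom_map_poly[OF h], of "[:0, C:]"] C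
  by (simp add: comp_def scale_poly_def[abs_def])

lemma coeff_scale_poly:
  assumes h: "inj_ring_hom h"
  shows "coeff (scale_poly h C p) k = C ^ k * h (coeff p k)"
  by (simp add: scale_poly_def coeff_pcompose_linear coeff_map_poly inj_ring_hom_0[OF h])

lemma fps_scale_mult:
  assumes h: "inj_ring_hom h" shows "fps_scale h C (F * G) = fps_scale h C F * fps_scale h C G"
proof (rule fps_ext)
  fix n
  have "fps_scale h C (F * G) $ n = (\<Sum>i=0..n. C ^ n * (h (F $ i) * h (G $ (n - i))))"
    by (simp add: fps_mult_nth inj_ring_hom_sum[OF h] inj_ring_hom_mult[OF h] sum_distrib_left)
  also have "\<dots> = (\<Sum>i=0..n. (C ^ i * h (F $ i)) * (C ^ (n - i) * h (G $ (n - i))))"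
  proof (rule sum.cong)
    fix i assume "i \<in> {0..n}"
    then have "C ^ n = C ^ i * C ^ (n - i)" by (simp add: power_add[symmetric])
    then show "C ^ n * (h (F $ i) * h (G $ (n - i))) = (C ^ i * h (F $ i)) * (C ^ (n - i) * h (G $ (n - i)))"
      by (simp add: mult_ac)
  qed simp
  also have "\<dots> = (fps_scale h C F * fps_scale h C G) $ n" by (simp add: fps_mult_nth)
  finally show "fps_scale h C (F * G) $ n = (fps_scale h C F * fps_scale h C G) $ n" .
qed

lemma fps_scale_1: assumes h: "inj_ring_hom h" shows "fps_scale h C 1 = 1"
  by (rule fps_ext) (simp add: inj_ring_hom_1[OF h] inj_ring_hom_0[OF h])

lemma fps_scale_inverse:
  assumes h: "inj_ring_hom h" and u: "G $ 0 \<noteq> 0"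
  shows "fps_scale h C (inverse G) = inverse (fps_scale h C G)"
proof -
  have "fps_scale h C G * fps_scale h C (inverse G) = 1"
    using fps_scale_mult[OF h, of C G "inverse G", symmetric] inverse_mult_eq_1'[OF u] fps_scale_1[OF h] by simp
  then show ?thesis by (rule fps_inverse_unique[symmetric])
qed

lemma fps_of_poly_scale_poly:
  assumes h: "inj_ring_hom h"
  shows "fps_of_poly (scale_poly h C p) = fps_scale h C (fps_of_poly p)"
  by (rule fps_ext) (simp add: coeff_scale_poly[OF h])

lemma scale_fract_Fract:
  assumes h: "inj_ring_hom h" and C: "C \<noteq> 0" and q: "q \<noteq> 0"
  shows "scale_fract h C (Fract p q) = Fract (scale_poly h C p) (scale_poly h C q)"
  unfolding scale_fract_def by (rule fract_lift_to_fr_Fract[OF inj_ring_hom_scale_poly[OF h C] q])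

lemma poly_scale_poly_0:
  "inj_ring_hom h \<Longrightarrow> poly (scale_poly h C q) 0 = h (poly q 0)"
  by (simp add: poly_0_coeff_0 coeff_scale_poly coeff_map_poly inj_ring_hom_0)

lemma regular0_scale_fract:
  assumes h: "inj_ring_hom h" and C: "C \<noteq> 0" and r: "regular0 \<phi>"
  shows "regular0 (scale_fract h C \<phi>)"
proof -
  obtain p q where q: "poly q 0 \<noteq> 0" and e: "\<phi> = Fract p q" using r by (rule regular0E)
  then have "q \<noteq> 0" by auto
  then show ?thesis
    unfolding e scale_fract_Fract[OF h C \<open>q \<noteq> 0\<close>]
    by (intro regular0_Fract) (simp add: q poly_scale_poly_0[OF h] inj_ring_hom_nonzero[OF h])
qed

lemma fps_of_fract_scale_fract:
  assumes h: "inj_ring_hom h" and C: "C \<noteq> 0" and r: "regular0 \<phi>"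
  shows "fps_of_fract (scale_fract h C \<phi>) = fps_scale h C (fps_of_fract \<phi>)"
proof -
  obtain p q where q: "poly q 0 \<noteq> 0" and e: "\<phi> = Fract p q" using r by (rule regular0E)
  have "q \<noteq> 0" using q by auto
  have u: "fps_of_poly q $ 0 \<noteq> 0" using q by (simp add: poly_0_coeff_0)
  have "poly (scale_poly h C q) 0 \<noteq> 0"
    using q by (simp add: poly_scale_poly_0[OF h] inj_ring_hom_nonzero[OF h])
  with q show ?thesis
    unfolding e scale_fract_Fract[OF h C \<open>q \<noteq> 0\<close>]
    by (simp add: fps_of_fract_Fract fps_of_poly_scale_poly[OF h] fps_scale_mult[OF h] fps_scale_inverse[OF h u])
qed

lemma inj_ring_hom_poly:
  assumes h: "inj_ring_hom h" shows "h (poly p x) = poly (map_poly h p) (h x)"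
  by (induction p) (simp_all add: map_poly_pCons inj_ring_hom_0[OF h] inj_ring_hom_add[OF h] inj_ring_hom_mult[OF h])

lemma pderiv_map_poly:
  assumes h: "inj_ring_hom h" shows "pderiv (map_poly h p) = map_poly h (pderiv p)"
  by (rule poly_eqI)
    (simp add: coeff_pderiv coeff_map_poly inj_ring_hom_0[OF h] inj_ring_hom_mult[OF h]
      inj_ring_hom_of_nat[OF h] inj_ring_hom_add[OF h] inj_ring_hom_1[OF h])

lemma ddt0_Fract: "poly q 0 \<noteq> 0 \<Longrightarrow>
   ddt0 (Fract p q) = (poly (pderiv p) 0 * poly q 0 - poly p 0 * poly (pderiv q) 0) / (poly q 0)^2"
  using ddt0_eq_fps_nth_1[OF regular0_Fract] fps_of_fract_Fract_nth_1 by metis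

definition map_fract :: "('a::field \<Rightarrow> 'b::field) \<Rightarrow> 'a poly fract \<Rightarrow> 'b poly fract" where
  "map_fract E = fract_lift (\<lambda>p. to_fr (map_poly E p))"

lemma map_fract_Fract:
  assumes E: "inj_ring_hom E" and q: "q \<noteq> 0"
  shows "map_fract E (Fract p q) = Fract (map_poly E p) (map_poly E q)"
  unfolding map_fract_def by (rule fract_lift_to_fr_Fract[OF inj_ring_hom_map_poly[OF E] q])

lemma ddt0_map_fract:
  assumes E: "inj_ring_hom E" and r: "regular0 \<phi>"
  shows "ddt0 (map_fract E \<phi>) = E (ddt0 \<phi>)"
proof -
  obtain p q where q: "poly q 0 \<noteq> 0" and e: "\<phi> = Fract p q" using r by (rule regular0E)
  have q0: "q \<noteq> 0" using q by auto
  have pe: "\<And>r. poly (map_poly E r) 0 = E (poly r 0)"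
    using inj_ring_hom_poly[OF E] inj_ring_hom_0[OF E] by metis
  have q': "poly (map_poly E q) 0 \<noteq> 0" using q by (simp add: pe inj_ring_hom_nonzero[OF E])
  show ?thesis unfolding e map_fract_Fract[OF E q0] ddt0_Fract[OF q] ddt0_Fract[OF q']
    by (simp add: pderiv_map_poly[OF E] pe inj_ring_hom_divide[OF E] inj_ring_hom_diff[OF E] inj_ring_hom_mult[OF E] inj_ring_hom_power[OF E])
qed

definition shift_poly :: "('a::field \<Rightarrow> 'b::field) \<Rightarrow> 'b \<Rightarrow> 'a poly \<Rightarrow> 'b poly" where
  "shift_poly e T p = pcompose (map_poly e p) [:T, 1:]"

lemma inj_ring_hom_shift_poly: "inj_ring_hom e \<Longrightarrow> inj_ring_hom (shift_poly e T)"
  using inj_ring_hom_comp[OF inj_ring_hom_pcompose inj_ring_hom_map_poly, of "[:T, 1:]" e]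
  by (simp add: comp_def shift_poly_def[abs_def])

lemma poly_shift_poly_0: "poly (shift_poly e T p) 0 = poly (map_poly e p) T"
  by (simp add: shift_poly_def poly_pcompose)

lemma pderiv_shift_poly:
  assumes e: "inj_ring_hom e" shows "pderiv (shift_poly e T p) = shift_poly e T (pderiv p)"
  by (simp add: shift_poly_def pderiv_pcompose pderiv_map_poly[OF e] pderiv_pCons)

lemma ddt0_Fract_shift_poly:
  assumes e: "inj_ring_hom e" and q: "poly (map_poly e q) T \<noteq> 0"
  shows "ddt0 (Fract (shift_poly e T p) (shift_poly e T q)) =
    (poly (map_poly e (pderiv p)) T * poly (map_poly e q) T - poly (map_poly e p) T * poly (map_poly e (pderiv q)) T)
      / (poly (map_poly e q) T)^2"
  using q by (simp add: ddt0_Fract poly_shift_poly_0 pderiv_shift_poly[OF e])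

section \<open>The torus action\<close>

lemma charval_add: "(\<forall>i. l i \<noteq> 0) \<Longrightarrow> charval l (a + b) = charval l a * charval l b"
  by (simp add: charval_def lookup_add power_int_add prod.distrib)

lemma charval_0 [simp]: "charval l 0 = 1"
  by (simp add: charval_def)

lemma charval_nonzero: "(\<forall>i. l i \<noteq> 0) \<Longrightarrow> charval l a \<noteq> 0"
  by (simp add: charval_def)

lemma charval_uminus: "(\<forall>i. l i \<noteq> 0) \<Longrightarrow> charval l (- a) = inverse (charval l a)"
  using charval_add[of l a "-a"] charval_nonzero[of l a]
  by (simp add: field_simps)

lemma charval_diff: "(\<forall>i. l i \<noteq> 0) \<Longrightarrow> charval l (a - b) = charval l a / charval l b"
  using charval_add[of l a "-b"] charval_uminus[of l b] by (simp add: divide_inverse)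

lemma lookup_torus_R: "Poly_Mapping.lookup (torus_R l f) a = charval l a * Poly_Mapping.lookup f a"
  by (simp add: torus_R_def lookup_mapp when_def in_keys_iff)

lemma torus_R_single: "torus_R l (Poly_Mapping.single a c) = Poly_Mapping.single a (charval l a * c)"
  by (rule poly_mapping_eqI) (simp add: lookup_torus_R lookup_single when_def)

lemma poly_mapping_sum_single:
  "(f :: 'a \<Rightarrow>\<^sub>0 'b::comm_monoid_add) =
    (\<Sum>a\<in>Poly_Mapping.keys f. Poly_Mapping.single a (Poly_Mapping.lookup f a))"
  by (rule poly_mapping_eqI) (simp add: lookup_sum lookup_single when_def sum.delta in_keys_iff)

lemma torus_R_add: "torus_R l (f + g) = torus_R l f + torus_R l g"
  by (rule poly_mapping_eqI) (simp add: lookup_torus_R lookup_add algebra_simps)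

lemma torus_R_0 [simp]: "torus_R l 0 = 0"
  by (rule poly_mapping_eqI) (simp add: lookup_torus_R)

lemma torus_R_sum: "torus_R l (sum F A) = (\<Sum>a\<in>A. torus_R l (F a))"
  by (induction A rule: infinite_finite_induct) (simp_all add: torus_R_add)

lemma poly_mapping_mult_expand:
  "f * g = (\<Sum>a\<in>Poly_Mapping.keys f. \<Sum>b\<in>Poly_Mapping.keys g.
     Poly_Mapping.single (a + b) (Poly_Mapping.lookup f a * Poly_Mapping.lookup g b))"
  by (subst poly_mapping_sum_single[of f], subst poly_mapping_sum_single[of g])
    (simp add: sum_product mult_single)

lemma inj_ring_hom_torus_R:
  fixes l :: "'n::{finite,linorder} \<Rightarrow> 'k::field_char_0"
  assumes l: "\<forall>i. l i \<noteq> 0"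
  shows "inj_ring_hom (torus_R l :: ('n, 'k) laurent \<Rightarrow> _)"
  unfolding inj_ring_hom_def
proof (intro conjI allI impI)
  fix f g :: "('n, 'k) laurent"
  show "torus_R l (f + g) = torus_R l f + torus_R l g" by (rule torus_R_add)
  have "torus_R l (f * g) = (\<Sum>a\<in>Poly_Mapping.keys f. \<Sum>b\<in>Poly_Mapping.keys g.
      Poly_Mapping.single (a + b) (charval l a * Poly_Mapping.lookup f a * (charval l b * Poly_Mapping.lookup g b)))"
    by (simp add: poly_mapping_mult_expand[of f g] torus_R_sum torus_R_single charval_add[OF l] mult_ac)
  also have "\<dots> = (\<Sum>a\<in>Poly_Mapping.keys f. Poly_Mapping.single a (charval l a * Poly_Mapping.lookup f a)) *
       (\<Sum>b\<in>Poly_Mapping.keys g. Poly_Mapping.single b (charval l b * Poly_Mapping.lookup g b))"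
    by (simp add: sum_product mult_single)
  also have "\<dots> = torus_R l f * torus_R l g"
    by (subst (3) poly_mapping_sum_single, subst (3) poly_mapping_sum_single) (simp add: torus_R_sum torus_R_single)
  finally show "torus_R l (f * g) = torus_R l f * torus_R l g" .
  show "torus_R l 1 = 1"
    by (simp add: torus_R_single flip: single_one)
  assume "f \<noteq> 0"
  then obtain a where "Poly_Mapping.lookup f a \<noteq> 0" by (metis poly_mapping_eqI lookup_zero)
  then have "Poly_Mapping.lookup (torus_R l f) a \<noteq> 0" by (simp add: lookup_torus_R charval_nonzero[OF l])
  then show "torus_R l f \<noteq> 0" by auto
qed

lemma inj_ring_hom_torus_K:
  assumes l: "\<forall>i. l i \<noteq> 0"
  shows "inj_ring_hom (torus_K l)"
  unfolding torus_K_def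
  by (rule inj_ring_hom_fract_lift[OF inj_ring_hom_to_fr_comp[OF inj_ring_hom_torus_R[OF l]]])

lemma torus_K_to_fr:
  assumes l: "\<forall>i. l i \<noteq> 0"
  shows "torus_K l (to_fr f) = to_fr (torus_R l f)"
  unfolding torus_K_def
  by (rule fract_lift_to_fr[OF inj_ring_hom_to_fr_comp[OF inj_ring_hom_torus_R[OF l]]])

lemma torus_K_Fract:
  assumes l: "\<forall>i. l i \<noteq> 0" and Q: "Q \<noteq> 0"
  shows "torus_K l (Fract P Q) = Fract (torus_R l P) (torus_R l Q)"
  unfolding torus_K_def by (rule fract_lift_to_fr_Fract[OF inj_ring_hom_torus_R[OF l] Q])

lemma twist_eq_scale_fract: "twist l c = scale_fract (torus_K l) (to_fr (Poly_Mapping.single 0 c))"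
  by (simp add: twist_def scale_fract_def scale_poly_def)

lemma to_fr_single_0_nonzero:
  "c \<noteq> 0 \<Longrightarrow> to_fr (Poly_Mapping.single 0 c :: ('n::{finite,linorder}, 'k::field_char_0) laurent) \<noteq> 0"
  using inj_ring_hom_nonzero[OF inj_ring_hom_to_fr] by (metis single_zero inj_single injD)

lemma regular0_twist:
  "\<forall>i. l i \<noteq> 0 \<Longrightarrow> c \<noteq> 0 \<Longrightarrow> regular0 \<phi> \<Longrightarrow> regular0 (twist l c \<phi>)"
  unfolding twist_eq_scale_fract
  by (rule regular0_scale_fract[OF inj_ring_hom_torus_K to_fr_single_0_nonzero])

lemma fps_of_fract_twist:
  "\<forall>i. l i \<noteq> 0 \<Longrightarrow> c \<noteq> 0 \<Longrightarrow> regular0 \<phi> \<Longrightarrow>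
    fps_of_fract (twist l c \<phi>) = fps_scale (torus_K l) (to_fr (Poly_Mapping.single 0 c)) (fps_of_fract \<phi>)"
  unfolding twist_eq_scale_fract
  by (rule fps_of_fract_scale_fract[OF inj_ring_hom_torus_K to_fr_single_0_nonzero])

lemma inj_ring_hom_constK: "inj_ring_hom constK"
proof -
  have "inj_ring_hom (\<lambda>c::'z::idom. [:c:])" unfolding inj_ring_hom_def by (auto simp: one_pCons)
  then have "inj_ring_hom (to_fr \<circ> (\<lambda>c::('n::{finite,linorder}, 'k::field_char_0) KT. [:c:]))"
    by (intro inj_ring_hom_comp inj_ring_hom_to_fr)
  then show ?thesis by (simp add: comp_def constK_def[abs_def])
qed

section \<open>The derivation of a rational \<open>G\<^sub>a\<close>-action\<close>

lemma Ga_action_inj_ring_hom: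
  assumes "rational_Ga_action A" shows "inj_ring_hom A"
proof -
  have add: "\<And>f g. A (f + g) = A f + A g" and inj: "inj A" and one: "A 1 = 1"
    and mult: "\<And>f g. A (f * g) = A f * A g"
    using assms by (auto simp: rational_Ga_action_def)
  have z: "A 0 = 0" using add[of 0 0] by (metis add_cancel_right_right add_0)
  show ?thesis unfolding inj_ring_hom_def using add mult one inj z by (metis injD)
qed

lemma Ga_action_regular0: "rational_Ga_action A \<Longrightarrow> regular0 (A f)"
  and Ga_action_eval0: "rational_Ga_action A \<Longrightarrow> eval0 (A f) = to_fr f"
  by (auto simp: rational_Ga_action_def)

lemma Ga_action_fps_nth_0: "rational_Ga_action A \<Longrightarrow> fps_of_fract (A f) $ 0 = to_fr f"
  using Ga_action_eval0 eval0_eq_fps_nth_0 Ga_action_regular0 by metis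

lemma associated_derivation_fps_nth_1:
  "rational_Ga_action A \<Longrightarrow> associated_derivation A f = fps_of_fract (A f) $ 1"
  using ddt0_eq_fps_nth_1 Ga_action_regular0 associated_derivation_def by metis

lemma poly_map_constK_T: "poly (map_poly constK p) (to_fr [:0, 1:]) = to_fr p"
proof -
  have "map_poly constK p = map_poly to_fr (map_poly (\<lambda>c. [:c:]) p)"
    by (simp add: map_poly_map_poly comp_def constK_def[abs_def] to_fr_def fract_collapse)
  then show ?thesis
    using inj_ring_hom_poly[OF inj_ring_hom_to_fr, of "map_poly (\<lambda>c. [:c:]) p" "[:0, 1:]"]
    by (simp flip: pcompose_altdef)
qed

lemma shift_st_eq_shift_poly:
  "(shift_st :: ('n::{finite,linorder}, 'k::field_char_0) KTt \<Rightarrow> _) =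
    fract_lift (\<lambda>p. to_fr (shift_poly constK (to_fr [:0, 1:]) p))"
proof -
  have "poly (map_poly (\<lambda>c. [:constK c:]) p) [:to_fr [:0, 1:], 1:] = shift_poly constK (to_fr [:0, 1:]) p"
    for p :: "('n, 'k) KT poly"
    unfolding shift_poly_def pcompose_altdef
    by (subst map_poly_map_poly) (simp_all add: comp_def constK_def to_fr_def fract_collapse)
  then show ?thesis unfolding shift_st_def by simp
qed

lemma ddt0_shift_st:
  fixes p q :: "('n::{finite,linorder},'k::field_char_0) KT poly"
  assumes q: "q \<noteq> 0"
  shows "ddt0 (shift_st (Fract p q)) = Fract (pderiv p * q - p * pderiv q) (q^2)"
proof -
  let ?T = "to_fr [:0, 1:] :: ('n::{finite,linorder},'k::field_char_0) KTt"
  let ?S = "shift_poly constK ?T"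
  have e: "shift_st (Fract p q) = Fract (?S p) (?S q)"
    unfolding shift_st_eq_shift_poly
    by (rule fract_lift_to_fr_Fract[OF inj_ring_hom_shift_poly[OF inj_ring_hom_constK] q])
  have tq: "to_fr q \<noteq> 0" using inj_ring_hom_nonzero[OF inj_ring_hom_to_fr q] .
  have "ddt0 (shift_st (Fract p q)) =
      (to_fr (pderiv p) * to_fr q - to_fr p * to_fr (pderiv q)) / (to_fr q)^2"
    unfolding e using ddt0_Fract_shift_poly[OF inj_ring_hom_constK, of q ?T p] tq by (simp add: poly_map_constK_T)
  also have "\<dots> = to_fr (pderiv p * q - p * pderiv q) / to_fr (q^2)"
    by (simp add: inj_ring_hom_diff[OF inj_ring_hom_to_fr] inj_ring_hom_mult[OF inj_ring_hom_to_fr] inj_ring_hom_power[OF inj_ring_hom_to_fr])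
  also have "\<dots> = Fract (pderiv p * q - p * pderiv q) (q^2)"
    using q by (simp add: to_fr_Fract)
  finally show ?thesis .
qed

lemma A_ext_associated_derivation:
  \<comment> \<open>the ODE \<open>d/dt \<alpha>\<^sup>*f = \<alpha>\<^sup>*(\<partial>f)\<close>, from differentiating the action axiom at \<open>s = 0\<close>\<close>
  assumes A: "rational_Ga_action A" and q: "poly q 0 \<noteq> 0" and e: "A f = Fract p q"
  shows "A_ext A (associated_derivation A f) = Fract (pderiv p * q - p * pderiv q) (q^2)"
proof -
  have hom: "inj_ring_hom (A_ext A)"
    unfolding A_ext_def by (rule inj_ring_hom_fract_lift[OF Ga_action_inj_ring_hom[OF A]])
  have cp: "comp_pullback A = map_fract (A_ext A)" by (simp add: comp_pullback_def map_fract_def)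
  have "comp_pullback A (A f) = shift_st (A f)" using A by (simp add: rational_Ga_action_def)
  then have "ddt0 (comp_pullback A (A f)) = ddt0 (shift_st (A f))" by simp
  moreover have "ddt0 (comp_pullback A (A f)) = A_ext A (associated_derivation A f)"
    unfolding cp associated_derivation_def by (rule ddt0_map_fract[OF hom Ga_action_regular0[OF A]])
  moreover have "q \<noteq> 0" using q by auto
  ultimately show ?thesis using e ddt0_shift_st by metis
qed

lemma k_derivation_associated_derivation:
  assumes A: "rational_Ga_action A" shows "k_derivation (associated_derivation A)"
proof -
  have hom: "inj_ring_hom A" by (rule Ga_action_inj_ring_hom[OF A])
  note r = Ga_action_regular0[OF A]
  let ?D = "associated_derivation A"
  have D: "\<And>f. ?D f = fps_of_fract (A f) $ 1" by (rule associated_derivation_fps_nth_1[OF A])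
  have add: "\<And>f g. ?D (f + g) = ?D f + ?D g"
    by (simp add: D inj_ring_hom_add[OF hom] fps_of_fract_add[OF r r])
  have mult: "\<And>f g. ?D (f * g) = to_fr f * ?D g + to_fr g * ?D f"
    by (simp add: D inj_ring_hom_mult[OF hom] fps_of_fract_mult[OF r r] fps_mult_nth_1 Ga_action_fps_nth_0[OF A] mult_ac)
  have c0: "?D (Poly_Mapping.single 0 c) = 0" for c
  proof -
    have "A (Poly_Mapping.single 0 c) = to_fr [: to_fr (Poly_Mapping.single 0 c) :]"
      using A by (simp add: rational_Ga_action_def constK_def)
    then show ?thesis by (simp add: D fps_of_fract_to_fr)
  qed
  show ?thesis unfolding k_derivation_def using add mult c0 by simp
qed

section \<open>Homogeneous derivations\<close>

lemma homog_K_eq_to_fr_single: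
  fixes \<phi> :: "('n::{finite,linorder},'k::field_char_0) KT"
  assumes "homog_K \<phi>" shows "\<exists>m c. \<phi> = to_fr (Poly_Mapping.single m c)"
proof -
  obtain m c m' c' where e: "\<phi> = Fract (Poly_Mapping.single m c) (Poly_Mapping.single m' c')"
    and nz: "Poly_Mapping.single m' c' \<noteq> (0::('n,'k) laurent)"
    using assms unfolding homog_K_def homog_R_def by blast
  have c': "c' \<noteq> 0" using nz by auto
  have "Fract (Poly_Mapping.single m c) (Poly_Mapping.single m' c') = to_fr (Poly_Mapping.single (m - m') (c / c'))"
    unfolding to_fr_def using nz c' by (simp add: eq_fract mult_single)
  then show ?thesis using e by blast
qed

lemma k_derivation_0: "k_derivation D \<Longrightarrow> D 0 = 0"
  unfolding k_derivation_def by (metis add_cancel_right_right add_0)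

lemma k_derivation_sum: "k_derivation D \<Longrightarrow> D (sum F S) = (\<Sum>a\<in>S. D (F a))"
  by (induction S rule: infinite_finite_induct) (auto simp: k_derivation_0 k_derivation_def)

lemma homogeneous_derivation_laurent_valued:
  fixes D :: "('n::{finite,linorder}, 'k::field_char_0) laurent \<Rightarrow> ('n, 'k) KT"
  assumes kd: "k_derivation D" and hd: "homogeneous_der D"
  shows "\<exists>g. D f = to_fr g"
proof -
  have "\<forall>a\<in>Poly_Mapping.keys f. \<exists>g. D (Poly_Mapping.single a (Poly_Mapping.lookup f a)) = to_fr g"
    using hd homog_K_eq_to_fr_single unfolding homogeneous_der_def homog_R_def by blast
  then obtain G where G: "\<forall>a\<in>Poly_Mapping.keys f. D (Poly_Mapping.single a (Poly_Mapping.lookup f a)) = to_fr (G a)"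
    by metis
  have "D f = D (\<Sum>a\<in>Poly_Mapping.keys f. Poly_Mapping.single a (Poly_Mapping.lookup f a))"
    by (subst poly_mapping_sum_single[of f]) simp
  also have "\<dots> = (\<Sum>a\<in>Poly_Mapping.keys f. to_fr (G a))" using G by (simp add: k_derivation_sum[OF kd])
  also have "\<dots> = to_fr (\<Sum>a\<in>Poly_Mapping.keys f. G a)" by (simp add: inj_ring_hom_sum[OF inj_ring_hom_to_fr])
  finally show ?thesis by blast
qed

lemma single_add_single_neq_single:
  fixes d d' :: "'b::comm_monoid_add"
  assumes "x \<noteq> y" "d \<noteq> 0" "d' \<noteq> 0"
  shows "Poly_Mapping.single x d + Poly_Mapping.single y d' \<noteq> Poly_Mapping.single b c"
proof
  assume e: "Poly_Mapping.single x d + Poly_Mapping.single y d' = Poly_Mapping.single b c"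
  have "Poly_Mapping.lookup (Poly_Mapping.single b c) x \<noteq> 0" "Poly_Mapping.lookup (Poly_Mapping.single b c) y \<noteq> 0"
    using assms by (simp_all flip: e add: lookup_add lookup_single when_def)
  then have "x = b" "y = b" by (simp_all add: lookup_single when_def split: if_splits)
  with assms(1) show False by simp
qed

definition laurent_der ::
  "(('n::{finite,linorder}, 'k::field_char_0) laurent \<Rightarrow> ('n, 'k) KT) \<Rightarrow> ('n, 'k) laurent \<Rightarrow> ('n, 'k) laurent"
where
  "laurent_der D f = (SOME g. D f = to_fr g)"

locale homogeneous_k_derivation =
  fixes D :: "('n::{finite,linorder}, 'k::field_char_0) laurent \<Rightarrow> ('n, 'k) KT"
  assumes kd: "k_derivation D" and hd: "homogeneous_der D"
begin

abbreviation "D' \<equiv> laurent_der D"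

lemma to_fr_laurent_der: "D f = to_fr (D' f)"
  unfolding laurent_der_def using homogeneous_derivation_laurent_valued[OF kd hd, of f] by (rule someI_ex)

lemma D'_add: "D' (f + g) = D' f + D' g"
proof (rule to_fr_inj)
  show "to_fr (D' (f + g)) = to_fr (D' f + D' g)"
    using kd unfolding k_derivation_def
    by (simp add: to_fr_laurent_der[symmetric] inj_ring_hom_add[OF inj_ring_hom_to_fr])
qed

lemma D'_0: "D' 0 = 0"
  using D'_add[of 0 0] by (metis add_cancel_right_right add_0)

lemma D'_sum: "D' (sum F S) = (\<Sum>a\<in>S. D' (F a))"
  by (induction S rule: infinite_finite_induct) (auto simp: D'_0 D'_add)

lemma D'_mult: "D' (f * g) = f * D' g + g * D' f"
proof (rule to_fr_inj)
  show "to_fr (D' (f * g)) = to_fr (f * D' g + g * D' f)"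
    using kd unfolding k_derivation_def
    by (simp add: to_fr_laurent_der[symmetric] inj_ring_hom_add[OF inj_ring_hom_to_fr]
        inj_ring_hom_mult[OF inj_ring_hom_to_fr])
qed

lemma D'_const: "D' (Poly_Mapping.single 0 c * f) = Poly_Mapping.single 0 c * D' f"
proof -
  have "D (Poly_Mapping.single 0 c * f) = to_fr (Poly_Mapping.single 0 c) * D f"
    using kd unfolding k_derivation_def by blast
  then have "to_fr (D' (Poly_Mapping.single 0 c * f)) = to_fr (Poly_Mapping.single 0 c * D' f)"
    by (simp only: to_fr_laurent_der[symmetric] inj_ring_hom_mult[OF inj_ring_hom_to_fr])
  then show ?thesis by (rule to_fr_inj)
qed

lemma D'_homog: "\<exists>b d. D' (Poly_Mapping.single a c) = Poly_Mapping.single b d"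
proof -
  have "homog_K (D (Poly_Mapping.single a c))" using hd unfolding homogeneous_der_def homog_R_def by blast
  then obtain b d where "D (Poly_Mapping.single a c) = to_fr (Poly_Mapping.single b d)"
    using homog_K_eq_to_fr_single by blast
  then show ?thesis using to_fr_laurent_der to_fr_inj by metis
qed

lemma laurent_der_shift_unique:
  assumes e1: "D' (Poly_Mapping.single a 1) = Poly_Mapping.single (a + s) d" and d: "d \<noteq> 0"
    and e2: "D' (Poly_Mapping.single a' 1) = Poly_Mapping.single (a' + s') d'" and d': "d' \<noteq> 0"
  shows "s = s'"
  \<comment> \<open>otherwise \<open>D'(\<chi>^(a+a')) = \<chi>^a D'(\<chi>^a') + \<chi>^a' D'(\<chi>^a)\<close> would have two terms\<close>
proof (rule ccontr)
  assume "s \<noteq> s'"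
  have "D' (Poly_Mapping.single (a + a') 1) = D' (Poly_Mapping.single a 1 * Poly_Mapping.single a' 1)"
    by (simp add: mult_single)
  also have "\<dots> = Poly_Mapping.single a 1 * Poly_Mapping.single (a' + s') d' + Poly_Mapping.single a' 1 * Poly_Mapping.single (a + s) d"
    by (simp add: D'_mult e1 e2)
  also have "\<dots> = Poly_Mapping.single (a + a' + s') d' + Poly_Mapping.single (a + a' + s) d"
    by (simp add: mult_single add.assoc add.left_commute)
  finally have "D' (Poly_Mapping.single (a + a') 1) =
      Poly_Mapping.single (a + a' + s') d' + Poly_Mapping.single (a + a' + s) d" .
  moreover obtain b c where "D' (Poly_Mapping.single (a + a') 1) = Poly_Mapping.single b c"
    using D'_homog by blast
  moreover have "a + a' + s' \<noteq> a + a' + s" using \<open>s \<noteq> s'\<close> by simp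
  ultimately show False using single_add_single_neq_single d d' by metis
qed

lemma laurent_der_common_shift: "\<exists>m0. \<forall>a. \<exists>d. D' (Poly_Mapping.single a 1) = Poly_Mapping.single (a + m0) d"
proof (cases "\<exists>a. D' (Poly_Mapping.single a 1) \<noteq> 0")
  case True
  then obtain a0 where a0: "D' (Poly_Mapping.single a0 1) \<noteq> 0" by blast
  obtain b0 d0 where e0: "D' (Poly_Mapping.single a0 1) = Poly_Mapping.single b0 d0" using D'_homog by blast
  have d0: "d0 \<noteq> 0" using a0 e0 by auto
  have e0': "D' (Poly_Mapping.single a0 1) = Poly_Mapping.single (a0 + (b0 - a0)) d0" using e0 by simp
  show ?thesis
  proof (rule exI[of _ "b0 - a0"], rule allI)
    fix a
    obtain b d where e: "D' (Poly_Mapping.single a 1) = Poly_Mapping.single b d" using D'_homog by blast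
    show "\<exists>d. D' (Poly_Mapping.single a 1) = Poly_Mapping.single (a + (b0 - a0)) d"
    proof (cases "d = 0")
      case True then show ?thesis using e by (intro exI[of _ 0]) simp
    next
      case False
      have e': "D' (Poly_Mapping.single a 1) = Poly_Mapping.single (a + (b - a)) d" using e by simp
      have "b - a = b0 - a0" using laurent_der_shift_unique[OF e' False e0' d0] .
      then show ?thesis using e' by metis
    qed
  qed
next
  case False
  then show ?thesis by (intro exI[of _ 0] allI exI[of _ 0]) simp
qed

lemma laurent_der_degree: "\<exists>m0 \<delta>. \<forall>a c. D' (Poly_Mapping.single a c) = Poly_Mapping.single (a + m0) (c * \<delta> a)"
proof -
  obtain m0 \<delta> where \<delta>: "\<forall>a. D' (Poly_Mapping.single a 1) = Poly_Mapping.single (a + m0) (\<delta> a)"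
    using laurent_der_common_shift by metis
  have "D' (Poly_Mapping.single a c) = Poly_Mapping.single (a + m0) (c * \<delta> a)" for a c
  proof -
    have "D' (Poly_Mapping.single a c) = D' (Poly_Mapping.single 0 c * Poly_Mapping.single a 1)"
      by (simp add: mult_single)
    then show ?thesis unfolding D'_const by (simp add: \<delta> mult_single)
  qed
  then show ?thesis by blast
qed

lemma laurent_der_torus_R:
  assumes deg: "\<forall>a c. D' (Poly_Mapping.single a c) = Poly_Mapping.single (a + m0) (c * \<delta> a)"
    and l: "\<forall>i. l i \<noteq> 0"
  shows "D' (torus_R l g) = Poly_Mapping.single 0 (charval l (- m0)) * torus_R l (D' g)"
proof -
  have mono: "D' (torus_R l (Poly_Mapping.single a c)) =
      Poly_Mapping.single 0 (charval l (- m0)) * torus_R l (D' (Poly_Mapping.single a c))" for a c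
  proof -
    have "charval l (- m0) * charval l (a + m0) = charval l a"
      using charval_add[OF l, of "- m0" "a + m0"] by simp
    then show ?thesis by (simp add: torus_R_single deg mult_single mult_ac)
  qed
  have "D' (torus_R l g) = D' (torus_R l (\<Sum>a\<in>Poly_Mapping.keys g. Poly_Mapping.single a (Poly_Mapping.lookup g a)))"
    by (subst poly_mapping_sum_single[of g]) simp
  also have "\<dots> = (\<Sum>a\<in>Poly_Mapping.keys g. Poly_Mapping.single 0 (charval l (- m0)) *
       torus_R l (D' (Poly_Mapping.single a (Poly_Mapping.lookup g a))))"
    by (simp add: torus_R_sum D'_sum mono)
  also have "\<dots> = Poly_Mapping.single 0 (charval l (- m0)) * torus_R l (D' g)"
    by (subst (3) poly_mapping_sum_single[of g]) (simp add: D'_sum torus_R_sum sum_distrib_left)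
  finally show ?thesis .
qed

lemma laurent_der_funpow_torus_R:
  assumes deg: "\<forall>a c. D' (Poly_Mapping.single a c) = Poly_Mapping.single (a + m0) (c * \<delta> a)"
    and l: "\<forall>i. l i \<noteq> 0"
  shows "(D' ^^ k) (torus_R l g) = Poly_Mapping.single 0 (charval l (- m0) ^ k) * torus_R l ((D' ^^ k) g)"
proof (induction k)
  case 0 then show ?case by (simp flip: single_one)
next
  case (Suc k)
  let ?c = "charval l (- m0)"
  have "(D' ^^ Suc k) (torus_R l g) = D' (Poly_Mapping.single 0 (?c ^ k) * torus_R l ((D' ^^ k) g))"
    using Suc by simp
  also have "\<dots> = Poly_Mapping.single 0 (?c ^ k) * (Poly_Mapping.single 0 ?c * torus_R l (D' ((D' ^^ k) g)))"
    unfolding D'_const laurent_der_torus_R[OF deg l] ..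
  also have "\<dots> = Poly_Mapping.single 0 (?c ^ Suc k) * torus_R l ((D' ^^ Suc k) g)"
    by (simp add: mult_single mult.assoc[symmetric] mult.commute)
  finally show ?case .
qed

end

lemma single_0_power: "Poly_Mapping.single 0 c ^ k = Poly_Mapping.single (0::'a::monoid_add) (c ^ k :: 'b::comm_semiring_1)"
  by (induction k) (simp_all add: mult_single)

lemma of_nat_KT_nonzero: "n \<noteq> 0 \<Longrightarrow> (of_nat n :: ('n::{finite,linorder}, 'k::field_char_0) KT) \<noteq> 0"
  using inj_ring_hom_nonzero[OF inj_ring_hom_to_fr, of "of_nat n :: ('n, 'k) laurent"]
  by (simp add: inj_ring_hom_of_nat[OF inj_ring_hom_to_fr])

lemma fps_deriv_fps_of_fract_Fract:
  fixes p q :: "'a::field poly"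
  assumes q: "poly q 0 \<noteq> 0"
  shows "fps_deriv (fps_of_fract (Fract p q)) = fps_of_fract (Fract (pderiv p * q - p * pderiv q) (q^2))"
proof -
  have q2: "poly (q^2) 0 \<noteq> 0" using q by simp
  have u: "fps_of_poly q $ 0 \<noteq> 0" using q by (simp add: poly_0_coeff_0)
  let ?P = "fps_of_poly p" and ?Q = "fps_of_poly q" and ?P' = "fps_of_poly (pderiv p)" and ?Q' = "fps_of_poly (pderiv q)"
  have "fps_of_fract (Fract (pderiv p * q - p * pderiv q) (q^2)) = (?P' * ?Q - ?P * ?Q') * (inverse ?Q)^2"
    unfolding fps_of_fract_Fract[OF q2]
    by (simp add: fps_of_poly_diff fps_of_poly_mult fps_of_poly_power fps_inverse_mult power2_eq_square)
  also have "\<dots> = ?P' * inverse ?Q * (?Q * inverse ?Q) - ?P * ?Q' * (inverse ?Q)^2"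
    by (simp add: algebra_simps power2_eq_square)
  also have "\<dots> = fps_deriv (fps_of_fract (Fract p q))"
    unfolding fps_of_fract_Fract[OF q] using inverse_mult_eq_1'[OF u]
    by (simp add: fps_inverse_deriv[OF u] fps_of_poly_pderiv algebra_simps)
  finally show ?thesis by simp
qed

locale homogeneous_Ga_action =
  fixes A :: "('n::{finite,linorder}, 'k::field_char_0) laurent \<Rightarrow> ('n, 'k) KTt"
  assumes A: "rational_Ga_action A" and hdA: "homogeneous_der (associated_derivation A)"
begin

sublocale homogeneous_k_derivation "associated_derivation A"
  using k_derivation_associated_derivation[OF A] hdA by unfold_locales

lemma A_laurent_der: "A (D' g) = A_ext A (associated_derivation A g)"
  unfolding A_ext_def
  by (subst to_fr_laurent_der) (simp add: fract_lift_to_fr[OF Ga_action_inj_ring_hom[OF A]])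

lemma fps_deriv_A: "fps_deriv (fps_of_fract (A g)) = fps_of_fract (A (D' g))"
proof -
  obtain p q where q: "poly q 0 \<noteq> 0" and e: "A g = Fract p q"
    using Ga_action_regular0[OF A] by (rule regular0E)
  show ?thesis
    unfolding A_laurent_der A_ext_associated_derivation[OF A q e] e fps_deriv_fps_of_fract_Fract[OF q] ..
qed

lemma fps_of_fract_A_nth:
  "fps_of_fract (A g) $ k = to_fr ((D' ^^ k) g) / of_nat (fact k)"
proof (induction k arbitrary: g)
  case 0 then show ?case by (simp add: Ga_action_fps_nth_0[OF A])
next
  case (Suc k)
  have "fps_of_fract (A g) $ Suc k = fps_deriv (fps_of_fract (A g)) $ k / of_nat (Suc k)"
    using of_nat_KT_nonzero[of "Suc k", where 'n='n and 'k='k] by (simp add: field_simps del: of_nat_Suc)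
  also have "\<dots> = fps_of_fract (A (D' g)) $ k / of_nat (Suc k)" by (simp add: fps_deriv_A)
  also have "\<dots> = to_fr ((D' ^^ k) (D' g)) / (of_nat (fact k) * of_nat (Suc k))" by (simp add: Suc)
  also have "\<dots> = to_fr ((D' ^^ Suc k) g) / of_nat (fact (Suc k))"
    by (simp only: funpow_Suc_right comp_def fact_Suc of_nat_id of_nat_mult mult.commute)
  finally show ?case .
qed

lemma A_torus_R:
  assumes deg: "\<forall>a c. D' (Poly_Mapping.single a c) = Poly_Mapping.single (a + m0) (c * \<delta> a)"
    and l: "\<forall>i. l i \<noteq> 0"
  shows "A (torus_R l f) = twist l (charval l (- m0)) (A f)"
proof -
  define c where "c = charval l (- m0)"
  have c: "c \<noteq> 0" unfolding c_def by (rule charval_nonzero[OF l])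
  let ?C = "to_fr (Poly_Mapping.single 0 c) :: ('n, 'k) KT"
  note hK = inj_ring_hom_torus_K[OF l]
  have "fps_of_fract (A (torus_R l f)) $ k = fps_of_fract (twist l c (A f)) $ k" for k
  proof -
    have "fps_of_fract (A (torus_R l f)) $ k =
        to_fr (Poly_Mapping.single 0 (c ^ k) * torus_R l ((D' ^^ k) f)) / of_nat (fact k)"
      by (simp add: fps_of_fract_A_nth laurent_der_funpow_torus_R[OF deg l] c_def)
    also have "\<dots> = ?C ^ k * torus_K l (to_fr ((D' ^^ k) f) / of_nat (fact k))"
      by (simp add: inj_ring_hom_mult[OF inj_ring_hom_to_fr] inj_ring_hom_power[OF inj_ring_hom_to_fr]
          inj_ring_hom_divide[OF hK] torus_K_to_fr[OF l] inj_ring_hom_of_nat[OF hK] flip: single_0_power)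
    also have "\<dots> = fps_of_fract (twist l c (A f)) $ k"
      by (simp add: fps_of_fract_twist[OF l c Ga_action_regular0[OF A]] fps_of_fract_A_nth)
    finally show ?thesis .
  qed
  then have "fps_of_fract (A (torus_R l f)) = fps_of_fract (twist l c (A f))"
    by (rule fps_ext)
  then show ?thesis
    unfolding c_def[symmetric]
    by (rule fps_of_fract_inj[OF Ga_action_regular0[OF A] regular0_twist[OF l c Ga_action_regular0[OF A]]])
qed

lemma T_homogeneous_A: "T_homogeneous A"
proof -
  obtain m0 \<delta> where "\<forall>a c. D' (Poly_Mapping.single a c) = Poly_Mapping.single (a + m0) (c * \<delta> a)"
    using laurent_der_degree by blast
  then show ?thesis unfolding T_homogeneous_def using A_torus_R by blast
qed

end

section \<open>Semi-invariant rational functions\<close>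

lemma powi_sum_eq_0_coeff:
  fixes c :: "int \<Rightarrow> 'k::field_char_0"
  assumes E: "finite E" and z: "\<forall>t::'k. t \<noteq> 0 \<longrightarrow> (\<Sum>e\<in>E. c e * t powi e) = 0"
    and e0: "e0 \<in> E"
  shows "c e0 = 0"
proof -
  obtain N :: int where N: "N \<ge> 0" "\<forall>e\<in>E. e + N \<ge> 0"
  proof
    show "(\<Sum>e\<in>E. \<bar>e\<bar>) \<ge> 0" by (simp add: sum_nonneg)
    show "\<forall>e\<in>E. e + (\<Sum>e\<in>E. \<bar>e\<bar>) \<ge> 0"
    proof
      fix e assume "e \<in> E"
      then have "\<bar>e\<bar> \<le> (\<Sum>e\<in>E. \<bar>e\<bar>)" using E by (intro member_le_sum) auto
      then show "e + (\<Sum>e\<in>E. \<bar>e\<bar>) \<ge> 0" by linarith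
    qed
  qed
  define p where "p = (\<Sum>e\<in>E. monom (c e) (nat (e + N)))"
  have pt: "poly p t = 0" if t: "t \<noteq> 0" for t :: 'k
  proof -
    have "poly p t = (\<Sum>e\<in>E. c e * t ^ nat (e + N))" by (simp add: p_def poly_sum poly_monom)
    also have "\<dots> = (\<Sum>e\<in>E. c e * t powi e) * t ^ nat N"
      unfolding sum_distrib_right
    proof (rule sum.cong)
      fix e assume "e \<in> E"
      then have "t ^ nat (e + N) = t powi (e + N)" using N by (simp add: power_int_def)
      also have "\<dots> = t powi e * t powi N" using t by (simp add: power_int_add)
      also have "t powi N = t ^ nat N" using N by (simp add: power_int_def)
      finally show "c e * t ^ nat (e + N) = c e * t powi e * t ^ nat N" by simp
    qed simp
    also have "\<dots> = 0" using z t by simp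
    finally show ?thesis .
  qed
  have "p = 0"
  proof (rule ccontr)
    assume "p \<noteq> 0"
    then have "finite {x. poly p x = 0}" by (rule poly_roots_finite)
    moreover have "{x::'k. x \<noteq> 0} \<subseteq> {x. poly p x = 0}" using pt by auto
    ultimately have "finite {x::'k. x \<noteq> 0}" by (rule finite_subset[rotated])
    then have "finite (insert 0 {x::'k. x \<noteq> 0})" by simp
    moreover have "insert 0 {x::'k. x \<noteq> 0} = UNIV" by auto
    ultimately show False using infinite_UNIV_char_0 by metis
  qed
  moreover have "coeff p (nat (e0 + N)) = c e0"
  proof -
    have "coeff p (nat (e0 + N)) = (\<Sum>e\<in>E. if nat (e + N) = nat (e0 + N) then c e else 0)"
      by (simp add: p_def coeff_sum)
    also have "\<dots> = (\<Sum>e\<in>E. if e = e0 then c e else 0)"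
      using N e0 by (intro sum.cong refl) (simp add: eq_nat_nat_iff)
    also have "\<dots> = c e0" using E e0 by simp
    finally show ?thesis .
  qed
  ultimately show ?thesis by simp
qed

lemma lookup_single_0_mult:
  "Poly_Mapping.lookup (Poly_Mapping.single 0 s * (X :: ('n::{finite,linorder}, 'k::field_char_0) laurent)) a
     = s * Poly_Mapping.lookup X a"
proof -
  have "Poly_Mapping.single 0 s * X = Poly_Mapping.map ((*) s) X" by (simp add: mult_map_scale_conv_mult)
  then show ?thesis by (simp add: map.rep_eq when_def)
qed

lemma laurent_powi_sum_eq_0:
  fixes v :: "int \<Rightarrow> ('n::{finite,linorder}, 'k::field_char_0) laurent"
  assumes E: "finite E"
    and z: "\<forall>t::'k. t \<noteq> 0 \<longrightarrow> (\<Sum>e\<in>E. Poly_Mapping.single 0 (t powi e) * v e) = 0"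
    and e0: "e0 \<in> E"
  shows "v e0 = 0"
proof (rule poly_mapping_eqI)
  fix a
  have "\<forall>t::'k. t \<noteq> 0 \<longrightarrow> (\<Sum>e\<in>E. Poly_Mapping.lookup (v e) a * t powi e) = 0"
  proof (intro allI impI)
    fix t :: 'k assume "t \<noteq> 0"
    then have "Poly_Mapping.lookup (\<Sum>e\<in>E. Poly_Mapping.single 0 (t powi e) * v e) a = 0" using z by simp
    then have "(\<Sum>e\<in>E. t powi e * Poly_Mapping.lookup (v e) a) = 0"
      by (simp add: lookup_sum lookup_single_0_mult)
    then show "(\<Sum>e\<in>E. Poly_Mapping.lookup (v e) a * t powi e) = 0"
      by (simp add: mult.commute)
  qed
  from powi_sum_eq_0_coeff[OF E this e0] show "Poly_Mapping.lookup (v e0) a = Poly_Mapping.lookup 0 a" by simp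
qed

definition coord_part :: "'n \<Rightarrow> int \<Rightarrow> ('n, 'k) laurent \<Rightarrow> ('n, 'k::zero) laurent" where
  "coord_part j e P = Poly_Mapping.mapp (\<lambda>a c. if Poly_Mapping.lookup a j = e then c else 0) P"

lemma lookup_coord_part: "Poly_Mapping.lookup (coord_part j e P) a = (if Poly_Mapping.lookup a j = e then Poly_Mapping.lookup P a else 0)"
  by (simp add: coord_part_def lookup_mapp when_def in_keys_iff)

lemma keys_coord_part:
  "a \<in> Poly_Mapping.keys (coord_part j e P) \<Longrightarrow> a \<in> Poly_Mapping.keys P \<and> Poly_Mapping.lookup a j = e"
  by (auto simp: in_keys_iff lookup_coord_part split: if_splits)

definition coord_torus :: "'n \<Rightarrow> 'k::field \<Rightarrow> 'n \<Rightarrow> 'k" where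
  "coord_torus j t = (\<lambda>i. if i = j then t else 1)"

lemma coord_torus_nonzero: "t \<noteq> 0 \<Longrightarrow> \<forall>i. coord_torus j t i \<noteq> 0"
  by (simp add: coord_torus_def)

lemma charval_coord_torus: "charval (coord_torus j t) (a :: 'n::finite \<Rightarrow>\<^sub>0 int) = t powi (Poly_Mapping.lookup a j)"
proof -
  have "charval (coord_torus j t) a = (\<Prod>i\<in>UNIV. if i = j then t powi (Poly_Mapping.lookup a i) else 1)"
    unfolding charval_def coord_torus_def by (intro prod.cong) auto
  also have "\<dots> = t powi (Poly_Mapping.lookup a j)" by (simp add: prod.delta')
  finally show ?thesis .
qed

lemma coord_part_decomposition:
  fixes Q :: "('n::{finite,linorder}, 'k::field_char_0) laurent"
  assumes E: "finite E" and sub: "\<forall>a\<in>Poly_Mapping.keys Q. Poly_Mapping.lookup a j + \<delta> \<in> E" and t: "t \<noteq> 0"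
  shows "Poly_Mapping.single 0 (t powi \<delta>) * torus_R (coord_torus j t) Q =
    (\<Sum>e\<in>E. Poly_Mapping.single 0 (t powi e) * coord_part j (e - \<delta>) Q)"
proof (rule poly_mapping_eqI)
  fix a
  have "Poly_Mapping.lookup (\<Sum>e\<in>E. Poly_Mapping.single 0 (t powi e) * coord_part j (e - \<delta>) Q) a =
     (\<Sum>e\<in>E. if e = Poly_Mapping.lookup a j + \<delta> then t powi e * Poly_Mapping.lookup Q a else 0)"
    by (simp add: lookup_sum lookup_single_0_mult lookup_coord_part) (intro sum.cong, auto)
  also have "\<dots> = (if Poly_Mapping.lookup a j + \<delta> \<in> E then t powi (Poly_Mapping.lookup a j + \<delta>) * Poly_Mapping.lookup Q a else 0)"
    using E by (simp add: sum.delta')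
  also have "\<dots> = t powi \<delta> * (t powi (Poly_Mapping.lookup a j) * Poly_Mapping.lookup Q a)"
    using sub t by (auto simp: in_keys_iff power_int_add mult_ac)
  also have "\<dots> = Poly_Mapping.lookup (Poly_Mapping.single 0 (t powi \<delta>) * torus_R (coord_torus j t) Q) a"
    by (simp add: lookup_single_0_mult lookup_torus_R charval_coord_torus)
  finally show "Poly_Mapping.lookup (Poly_Mapping.single 0 (t powi \<delta>) * torus_R (coord_torus j t) Q) a =
    Poly_Mapping.lookup (\<Sum>e\<in>E. Poly_Mapping.single 0 (t powi e) * coord_part j (e - \<delta>) Q) a" by simp
qed

definition semi_invariant :: "('n::{finite,linorder} \<Rightarrow>\<^sub>0 int) \<Rightarrow> ('n, 'k::field_char_0) KT \<Rightarrow> bool" where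
  "semi_invariant d g \<longleftrightarrow>
     (\<forall>l. (\<forall>i. l i \<noteq> 0) \<longrightarrow> torus_K l g = to_fr (Poly_Mapping.single 0 (charval l d)) * g)"

definition coord_const :: "'n \<Rightarrow> ('n, 'k::zero) laurent \<Rightarrow> bool" where
  "coord_const j P \<longleftrightarrow> (\<exists>e. \<forall>a\<in>Poly_Mapping.keys P. Poly_Mapping.lookup a j = e)"

lemma semi_invariant_coord_part_eq:
  fixes P Q :: "('n::{finite,linorder}, 'k::field_char_0) laurent"
  assumes eig: "semi_invariant d (Fract P Q)" and Q: "Q \<noteq> 0"
  shows "coord_part j e P * Q = P * coord_part j (e - Poly_Mapping.lookup d j) Q"
  \<comment> \<open>On the one-parameter subgroup \<open>t \<mapsto> (1,\<dots>,t,\<dots>,1)\<close> semi-invariance becomes an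
    identity of Laurent polynomials in \<open>t\<close>; compare the coefficients of \<open>t\<^sup>e\<close>.\<close>
proof -
  define \<delta> where "\<delta> = Poly_Mapping.lookup d j"
  define E where "E = insert e ((\<lambda>a. Poly_Mapping.lookup a j) ` Poly_Mapping.keys P \<union>
    (\<lambda>a. Poly_Mapping.lookup a j + \<delta>) ` Poly_Mapping.keys Q)"
  have E: "finite E" "e \<in> E" unfolding E_def by simp_all
  define v where "v e = coord_part j e P * Q - P * coord_part j (e - \<delta>) Q" for e
  have "(\<Sum>e\<in>E. Poly_Mapping.single 0 (t powi e) * v e) = 0" if t: "t \<noteq> 0" for t :: 'k
  proof -
    let ?l = "coord_torus j t"
    have l: "\<forall>i. ?l i \<noteq> 0" by (rule coord_torus_nonzero[OF t])
    have "torus_K ?l (Fract P Q) = to_fr (Poly_Mapping.single 0 (charval ?l d)) * Fract P Q"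
      using eig l unfolding semi_invariant_def by blast
    then have "Fract (torus_R ?l P) (torus_R ?l Q) = Fract (Poly_Mapping.single 0 (t powi \<delta>) * P) Q"
      unfolding torus_K_Fract[OF l Q] by (simp add: to_fr_def charval_coord_torus \<delta>_def)
    moreover have "torus_R ?l Q \<noteq> 0" using inj_ring_hom_nonzero[OF inj_ring_hom_torus_R[OF l] Q] .
    ultimately have eq: "torus_R ?l P * Q = Poly_Mapping.single 0 (t powi \<delta>) * P * torus_R ?l Q"
      using Q by (simp add: eq_fract)
    have dP: "Poly_Mapping.single 0 (t powi 0) * torus_R ?l P =
        (\<Sum>e\<in>E. Poly_Mapping.single 0 (t powi e) * coord_part j (e - 0) P)"
      by (rule coord_part_decomposition[OF E(1) _ t]) (auto simp: E_def)
    have dQ: "Poly_Mapping.single 0 (t powi \<delta>) * torus_R ?l Q =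
        (\<Sum>e\<in>E. Poly_Mapping.single 0 (t powi e) * coord_part j (e - \<delta>) Q)"
      by (rule coord_part_decomposition[OF E(1) _ t]) (auto simp: E_def)
    have "(\<Sum>e\<in>E. Poly_Mapping.single 0 (t powi e) * v e) =
       (\<Sum>e\<in>E. Poly_Mapping.single 0 (t powi e) * coord_part j e P) * Q -
       P * (\<Sum>e\<in>E. Poly_Mapping.single 0 (t powi e) * coord_part j (e - \<delta>) Q)"
      by (simp add: v_def sum_distrib_left sum_distrib_right sum_subtractf algebra_simps)
    also have "\<dots> = torus_R ?l P * Q - P * (Poly_Mapping.single 0 (t powi \<delta>) * torus_R ?l Q)"
      using dP dQ by simp
    also have "\<dots> = 0" using eq by (simp add: algebra_simps)
    finally show ?thesis .
  qed
  then have "v e = 0" using laurent_powi_sum_eq_0[OF E(1) _ E(2)] by blast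
  then show ?thesis by (simp add: v_def \<delta>_def)
qed

lemma semi_invariant_coord_const_step:
  fixes g :: "('n::{finite,linorder}, 'k::field_char_0) KT"
  assumes eig: "semi_invariant d g"
    and Q: "Q \<noteq> 0" and g: "g = Fract P Q"
  shows "\<exists>P' Q'. Q' \<noteq> 0 \<and> g = Fract P' Q' \<and> Poly_Mapping.keys P' \<subseteq> Poly_Mapping.keys P \<and>
     Poly_Mapping.keys Q' \<subseteq> Poly_Mapping.keys Q \<and> coord_const j P' \<and> coord_const j Q'"
proof -
  define \<delta> where "\<delta> = Poly_Mapping.lookup d j"
  have "Poly_Mapping.keys Q \<noteq> {}" using Q by simp
  then obtain b where b: "b \<in> Poly_Mapping.keys Q" by blast
  define e0 where "e0 = Poly_Mapping.lookup b j + \<delta>"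
  define P' where "P' = coord_part j e0 P"
  define Q' where "Q' = coord_part j (e0 - \<delta>) Q"
  have "Poly_Mapping.lookup Q' b \<noteq> 0" using b by (simp add: Q'_def lookup_coord_part e0_def in_keys_iff)
  then have Q': "Q' \<noteq> 0" by auto
  have "P' * Q = P * Q'"
    unfolding P'_def Q'_def \<delta>_def using semi_invariant_coord_part_eq[OF eig[unfolded g] Q] .
  then have "g = Fract P' Q'" unfolding g using Q Q' by (simp add: eq_fract)
  moreover have "Poly_Mapping.keys P' \<subseteq> Poly_Mapping.keys P"
    unfolding P'_def using keys_coord_part by (metis subsetI)
  moreover have "Poly_Mapping.keys Q' \<subseteq> Poly_Mapping.keys Q"
    unfolding Q'_def using keys_coord_part by (metis subsetI)
  moreover have "coord_const j P'"
    unfolding coord_const_def P'_def by (intro exI[of _ e0] ballI) (metis keys_coord_part)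
  moreover have "coord_const j Q'"
    unfolding coord_const_def Q'_def by (intro exI[of _ "e0 - \<delta>"] ballI) (metis keys_coord_part)
  ultimately show ?thesis using Q' by blast
qed

lemma semi_invariant_coord_const:
  fixes g :: "('n::{finite,linorder}, 'k::field_char_0) KT"
  assumes eig: "semi_invariant d g"
    and I: "finite I"
  shows "\<exists>P Q. Q \<noteq> 0 \<and> g = Fract P Q \<and> (\<forall>j\<in>I. coord_const j P \<and> coord_const j Q)"
  using I
proof (induction I rule: finite_induct)
  case empty
  obtain P Q where "g = Fract P Q" "Q \<noteq> 0" by (cases g) auto
  then show ?case by blast
next
  case (insert j I)
  then obtain P Q where Q: "Q \<noteq> 0" and g: "g = Fract P Q" and fx: "\<forall>j\<in>I. coord_const j P \<and> coord_const j Q" by blast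
  obtain P' Q' where Q': "Q' \<noteq> 0" and g': "g = Fract P' Q'" and sub: "Poly_Mapping.keys P' \<subseteq> Poly_Mapping.keys P"
      "Poly_Mapping.keys Q' \<subseteq> Poly_Mapping.keys Q" and fj: "coord_const j P'" "coord_const j Q'"
    using semi_invariant_coord_const_step[OF eig Q g] by blast
  have "\<forall>i\<in>I. coord_const i P' \<and> coord_const i Q'" using fx sub unfolding coord_const_def by blast
  then show ?case using Q' g' fj by blast
qed

lemma coord_const_single:
  fixes P :: "('n::{finite,linorder}, 'k::field_char_0) laurent"
  assumes "\<forall>j. coord_const j P"
  shows "\<exists>a c. P = Poly_Mapping.single a c"
proof (cases "P = 0")
  case True then show ?thesis by (intro exI[of _ 0]) simp
next
  case False
  then have "Poly_Mapping.keys P \<noteq> {}" by simp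
  then obtain a0 where a0: "a0 \<in> Poly_Mapping.keys P" by blast
  have k: "\<forall>a\<in>Poly_Mapping.keys P. a = a0"
  proof
    fix a assume a: "a \<in> Poly_Mapping.keys P"
    show "a = a0"
    proof (rule poly_mapping_eqI)
      fix j
      from assms obtain e where "\<forall>b\<in>Poly_Mapping.keys P. Poly_Mapping.lookup b j = e" unfolding coord_const_def by blast
      then show "Poly_Mapping.lookup a j = Poly_Mapping.lookup a0 j" using a a0 by simp
    qed
  qed
  have "P = Poly_Mapping.single a0 (Poly_Mapping.lookup P a0)"
  proof (rule poly_mapping_eqI)
    fix a show "Poly_Mapping.lookup P a = Poly_Mapping.lookup (Poly_Mapping.single a0 (Poly_Mapping.lookup P a0)) a"
      using k by (cases "a = a0") (auto simp: lookup_single when_def in_keys_iff)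
  qed
  then show ?thesis by blast
qed

lemma semi_invariant_homog_K:
  fixes g :: "('n::{finite,linorder}, 'k::field_char_0) KT"
  assumes eig: "semi_invariant d g"
  shows "homog_K g"
proof -
  obtain P Q where Q: "Q \<noteq> 0" and g: "g = Fract P Q" and fx: "\<forall>j\<in>UNIV. coord_const j P \<and> coord_const j Q"
    using semi_invariant_coord_const[OF eig, of UNIV] by auto
  obtain a c where "P = Poly_Mapping.single a c" using coord_const_single fx by blast
  moreover obtain a' c' where "Q = Poly_Mapping.single a' c'" using coord_const_single fx by blast
  ultimately show ?thesis unfolding homog_K_def homog_R_def using Q g by blast
qed

lemma associated_derivation_torus_R:
  assumes A: "rational_Ga_action A"
    and m0: "\<forall>f. A (torus_R l f) = twist l (charval l m0) (A f)" and l: "\<forall>i. l i \<noteq> 0"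
  shows "associated_derivation A (torus_R l f) =
    to_fr (Poly_Mapping.single 0 (charval l m0)) * torus_K l (associated_derivation A f)"
proof -
  have c: "charval l m0 \<noteq> 0" by (rule charval_nonzero[OF l])
  have "associated_derivation A (torus_R l f) = fps_of_fract (twist l (charval l m0) (A f)) $ 1"
    using m0 by (simp add: associated_derivation_fps_nth_1[OF A])
  then show ?thesis
    by (simp add: fps_of_fract_twist[OF l c Ga_action_regular0[OF A]] associated_derivation_fps_nth_1[OF A])
qed

lemma semi_invariant_associated_derivation_single:
  fixes A :: "('n::{finite,linorder}, 'k::field_char_0) laurent \<Rightarrow> ('n, 'k) KTt"
  assumes A: "rational_Ga_action A"
    and m0: "\<forall>l. (\<forall>i. l i \<noteq> 0) \<longrightarrow> (\<forall>f. A (torus_R l f) = twist l (charval l m0) (A f))"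
  shows "semi_invariant (a - m0) (associated_derivation A (Poly_Mapping.single a 1))"
  unfolding semi_invariant_def
proof (intro allI impI)
  fix l :: "'n \<Rightarrow> 'k" assume l: "\<forall>i. l i \<noteq> 0"
  let ?g = "associated_derivation A (Poly_Mapping.single a 1)"
  let ?C = "\<lambda>d. to_fr (Poly_Mapping.single 0 (charval l d)) :: ('n, 'k) KT"
  have "torus_R l (Poly_Mapping.single a 1) = Poly_Mapping.single 0 (charval l a) * Poly_Mapping.single a 1"
    by (simp add: torus_R_single mult_single)
  moreover have "associated_derivation A (Poly_Mapping.single 0 c * f) =
      to_fr (Poly_Mapping.single 0 c) * associated_derivation A f" for c f
    using k_derivation_associated_derivation[OF A] unfolding k_derivation_def by blast
  ultimately have "?C a * ?g = ?C m0 * torus_K l ?g"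
    using associated_derivation_torus_R[OF A _ l, of m0 "Poly_Mapping.single a 1"] m0 l by simp
  moreover have "?C a = ?C (a - m0) * ?C m0"
    using charval_nonzero[OF l, of m0]
    by (simp add: inj_ring_hom_mult[OF inj_ring_hom_to_fr, symmetric] mult_single charval_diff[OF l])
  moreover have "?C m0 \<noteq> 0" by (rule to_fr_single_0_nonzero[OF charval_nonzero[OF l]])
  ultimately show "torus_K l ?g = ?C (a - m0) * ?g" by (simp add: mult_ac)
qed

lemma homogeneous_der_if_homog_K_single:
  fixes D :: "('n::{finite,linorder}, 'k::field_char_0) laurent \<Rightarrow> ('n, 'k) KT"
  assumes D: "k_derivation D" and hom: "\<And>a. homog_K (D (Poly_Mapping.single a 1))"
  shows "homogeneous_der D"
  unfolding homogeneous_der_def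
proof (intro allI impI)
  fix f :: "('n, 'k) laurent" assume "homog_R f"
  then obtain a c where f: "f = Poly_Mapping.single a c"
    unfolding homog_R_def by blast
  obtain x y where xy: "homog_R x" "homog_R y" "y \<noteq> 0" "D (Poly_Mapping.single a 1) = Fract x y"
    using hom[of a] unfolding homog_K_def by blast
  obtain mx cx where x: "x = Poly_Mapping.single mx cx"
    using xy(1) unfolding homog_R_def by blast
  have "D (Poly_Mapping.single 0 c * Poly_Mapping.single a 1) =
      to_fr (Poly_Mapping.single 0 c) * D (Poly_Mapping.single a 1)"
    using D unfolding k_derivation_def by blast
  then have "D f = Fract (Poly_Mapping.single mx (c * cx)) y"
    by (simp add: f xy(4) x to_fr_def mult_single)
  moreover have "homog_R (Poly_Mapping.single mx (c * cx) :: ('n, 'k) laurent)"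
    unfolding homog_R_def by blast
  ultimately show "homog_K (D f)" unfolding homog_K_def using xy(2,3) by blast
qed

lemma T_homogeneous_homogeneous_der:
  assumes A: "rational_Ga_action A" and T: "T_homogeneous A"
  shows "homogeneous_der (associated_derivation A)"
proof -
  obtain m0 where m0: "\<forall>l. (\<forall>i. l i \<noteq> 0) \<longrightarrow> (\<forall>f. A (torus_R l f) = twist l (charval l m0) (A f))"
    using T unfolding T_homogeneous_def by blast
  show ?thesis
    using k_derivation_associated_derivation[OF A]
      semi_invariant_homog_K[OF semi_invariant_associated_derivation_single[OF A m0]]
    by (rule homogeneous_der_if_homog_K_single)
qed

lemma homogeneous_der_T_homogeneous:
  assumes "rational_Ga_action A" and "homogeneous_der (associated_derivation A)"
  shows "T_homogeneous A"
proof -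
  interpret homogeneous_Ga_action A using assms by unfold_locales
  show ?thesis by (rule T_homogeneous_A)
qed

theorem lemma3p3:
  fixes A :: "('n::{finite,linorder}, 'k::field_char_0) laurent \<Rightarrow> ('n, 'k) KTt"
    and D :: "('n, 'k) laurent \<Rightarrow> ('n, 'k) KT"
  shows "(rational_Ga_action A \<longrightarrow>
            (T_homogeneous A \<longleftrightarrow> homogeneous_der (associated_derivation A)))
       \<and> (k_derivation D \<and> homogeneous_der D \<longrightarrow> (\<forall>f. \<exists>g. D f = to_fr g))"
proof (intro conjI impI allI)
  assume A: "rational_Ga_action A"
  show "T_homogeneous A \<longleftrightarrow> homogeneous_der (associated_derivation A)"
    using T_homogeneous_homogeneous_der[OF A] homogeneous_der_T_homogeneous[OF A] by blast
next
  fix f assume "k_derivation D \<and> homogeneous_der D"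
  then show "\<exists>g. D f = to_fr g" using homogeneous_derivation_laurent_valued by blast
qed

end
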